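(* Let $q$ be a fixed prime power and $0\le k\le n$. Given $\mathrm{EXT}(X)$ for $X\in\mathcal{G}_q(n,k)$, the lexicographic index \[\mathrm{I}_{\mathrm{EXT}}(X)=\sum_{j=1}^{n}\Bigl(v_j\,q^{k-w_{j-1}}+(1-v_j)\frac{\{X_j\}}{q^{w_{j-1}}}\Bigr)\left[\begin{smallmatrix} n-j\\ k-w_{j-1}\end{smallmatrix}\right]_q\] can be computed with $O(nk(n-k)\log n\log\log n)$ operations on $q$-ary digits.
   Context: $\mathcal{G}_q(n,k)$ is the set of $k$-dimensional subspaces of $\mathbb{F}_q^n$, with field elements identified with $\mathbb{Z}_q=\{0,\dots,q-1\}$. $\left[\begin{smallmatrix} n\\ k\end{smallmatrix}\right]_q=\prod_{i=0}^{k-1}\frac{q^{n-i}-1}{q^{k-i}-1}$ (equal to $1$ for $k=0$ and $0$ if $k>n$ or $k<0$). For $X\in\mathcal{G}_q(n,k)$: $\mathrm{RE}(X)$ is the unique $k\times n$ reduced row echelon matrix whose rows span $X$, columns $X_n,\dots,X_1$ left to right; $v(X)=(v_n,\dots,v_1)$ is binary with $v_i=1$ iff column $X_i$ contains a row's leading one; $\mathrm{EXT}(X)$ is $v(X)$ placed as a top row above $\mathrm{RE}(X)$. $w_j=\sum_{\ell\le j}v_\ell$, $w_0=0$. For a $q$-ary vector $y=(y_1,\dots,y_r)$, $\{y\}=\sum_t y_tq^{r-t}$. All integers are handled in base $q$; the cost model counts digit operations, with multiplication of $q$-ary integers of lengths $a>b$ costing $O(a\log b\log\log b)$ digit operations,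 and multiplication/division by $q^i$ being a shift. *)

theory Defs
  imports Complex_Main "HOL-Library.Log_Nat"
begin

definition gbinom :: "nat \<Rightarrow> nat \<Rightarrow> nat \<Rightarrow> nat" where
  "gbinom q n k = (if k > n then 0 else
     nat \<lfloor>\<Prod>i<k. (real q ^ (n - i) - 1) / (real q ^ (k - i) - 1)\<rfloor>)"

text \<open>A vector of F^n is a function x with x i the coordinate of column X_i (1 \<le> i \<le> n);
  columns are displayed X_n, ..., X_1 from left to right.\<close>

definition vecs :: "nat \<Rightarrow> (nat \<Rightarrow> 'a::zero) set" where
  "vecs n = {x. \<forall>i. (i = 0 \<or> n < i) \<longrightarrow> x i = 0}"

definition lincomb :: "nat \<Rightarrow> (nat \<Rightarrow> nat \<Rightarrow> 'a::field) \<Rightarrow> (nat \<Rightarrow> 'a) \<Rightarrow> (nat \<Rightarrow> 'a)" where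
  "lincomb k B c = (\<lambda>i. \<Sum>t=1..k. c t * B t i)"

definition span_rows :: "nat \<Rightarrow> (nat \<Rightarrow> nat \<Rightarrow> 'a::field) \<Rightarrow> (nat \<Rightarrow> 'a) set" where
  "span_rows k B = range (lincomb k B)"

definition lin_indep :: "nat \<Rightarrow> (nat \<Rightarrow> nat \<Rightarrow> 'a::field) \<Rightarrow> bool" where
  "lin_indep k B = (\<forall>c. lincomb k B c = (\<lambda>_. 0) \<longrightarrow> (\<forall>t\<in>{1..k}. c t = 0))"

definition grass :: "nat \<Rightarrow> nat \<Rightarrow> (nat \<Rightarrow> 'a::{finite,field}) set set" where
  "grass n k = {span_rows k B | B. (\<forall>t\<in>{1..k}. B t \<in> vecs n) \<and> lin_indep k B}"

text \<open>Column index (i.e. i of X_i) of the leading (leftmost nonzero) entry of row t.\<close>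
definition lead :: "(nat \<Rightarrow> nat \<Rightarrow> 'a::zero) \<Rightarrow> nat \<Rightarrow> nat" where
  "lead M t = (GREATEST i. M t i \<noteq> 0)"

text \<open>M t i is the entry in row t (1..k, top to bottom) and column X_i (1..n).\<close>
definition is_rref :: "nat \<Rightarrow> nat \<Rightarrow> (nat \<Rightarrow> nat \<Rightarrow> 'a::field) \<Rightarrow> bool" where
  "is_rref n k M =
    ((\<forall>t i. (t \<notin> {1..k} \<or> i \<notin> {1..n}) \<longrightarrow> M t i = 0) \<and>
     (\<forall>t\<in>{1..k}. \<exists>i. M t i \<noteq> 0) \<and>
     (\<forall>t\<in>{1..k}. M t (lead M t) = 1) \<and>
     (\<forall>t\<in>{1..k}. \<forall>t'\<in>{1..k}. t < t' \<longrightarrow> lead M t' < lead M t) \<and>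
     (\<forall>t\<in>{1..k}. \<forall>t'\<in>{1..k}. t' \<noteq> t \<longrightarrow> M t' (lead M t) = 0))"

definition RE :: "nat \<Rightarrow> nat \<Rightarrow> (nat \<Rightarrow> 'a::{finite,field}) set \<Rightarrow> (nat \<Rightarrow> nat \<Rightarrow> 'a)" where
  "RE n k X = (THE M. is_rref n k M \<and> span_rows k M = X)"

definition vv :: "nat \<Rightarrow> nat \<Rightarrow> (nat \<Rightarrow> 'a::{finite,field}) set \<Rightarrow> nat \<Rightarrow> nat" where
  "vv n k X i = (if 1 \<le> i \<and> i \<le> n \<and> (\<exists>t\<in>{1..k}. lead (RE n k X) t = i) then 1 else 0)"

definition ww :: "nat \<Rightarrow> nat \<Rightarrow> (nat \<Rightarrow> 'a::{finite,field}) set \<Rightarrow> nat \<Rightarrow> nat" where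
  "ww n k X j = (\<Sum>l=1..j. vv n k X l)"

text \<open>{X_j}: the column X_j read top to bottom as a q-ary number, with the field
  identified with {0..q-1} via \<phi>.\<close>
definition colval :: "('a::{finite,field} \<Rightarrow> nat) \<Rightarrow> nat \<Rightarrow> nat \<Rightarrow> (nat \<Rightarrow> 'a) set \<Rightarrow> nat \<Rightarrow> nat" where
  "colval \<phi> n k X j = (\<Sum>t=1..k. \<phi> (RE n k X t j) * card (UNIV :: 'a set) ^ (k - t))"

text \<open>EXT(X) as a matrix of q-ary digits: row 0 is v(X), rows 1..k are RE(X);
  column position p = 1..n from left to right, i.e. column X_(n+1-p).\<close>
definition EXT :: "('a::{finite,field} \<Rightarrow> nat) \<Rightarrow> nat \<Rightarrow> nat \<Rightarrow> (nat \<Rightarrow> 'a) set \<Rightarrow> nat \<Rightarrow> nat \<Rightarrow> nat" where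
  "EXT \<phi> n k X r p =
     (if 1 \<le> p \<and> p \<le> n \<and> r \<le> k then
        (if r = 0 then vv n k X (n + 1 - p) else \<phi> (RE n k X r (n + 1 - p)))
      else 0)"

definition I_EXT :: "('a::{finite,field} \<Rightarrow> nat) \<Rightarrow> nat \<Rightarrow> nat \<Rightarrow> (nat \<Rightarrow> 'a) set \<Rightarrow> nat" where
  "I_EXT \<phi> n k X = (\<Sum>j=1..n.
     (vv n k X j * card (UNIV :: 'a set) ^ (k - ww n k X (j - 1))
      + (1 - vv n k X j) * (colval \<phi> n k X j div card (UNIV :: 'a set) ^ ww n k X (j - 1)))
     * gbinom (card (UNIV :: 'a set)) (n - j) (k - ww n k X (j - 1)))"

definition qlen :: "nat \<Rightarrow> nat \<Rightarrow> nat" where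
  "qlen q x = max 1 (floorlog q x)"

definition lg :: "nat \<Rightarrow> nat" where
  "lg x = max 1 (floorlog 2 x)"

definition mcost :: "nat \<Rightarrow> nat \<Rightarrow> nat \<Rightarrow> nat" where
  "mcost q x y = (let a = max (qlen q x) (qlen q y); b = min (qlen q x) (qlen q y)
                  in a * lg b * lg (lg b))"

datatype aexp =
    Cnst nat
  | Reg nat
  | Plus nat nat | Minus nat nat   \<comment> \<open>(truncated) subtraction\<close>
  | Times nat nat | Quot nat nat | Rem nat nat
  | ShL nat nat
  | ShR nat nat
  | Inp nat nat

datatype com =
    Skip
  | Assign nat aexp
  | Seq com com
  | If nat nat com com
  | While nat nat com

fun aval :: "nat \<Rightarrow> (nat \<Rightarrow> nat \<Rightarrow> nat) \<Rightarrow> aexp \<Rightarrow> (nat \<Rightarrow> nat) \<Rightarrow> nat" where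
  "aval q inp (Cnst c) s = c"
| "aval q inp (Reg a) s = s a"
| "aval q inp (Plus a b) s = s a + s b"
| "aval q inp (Minus a b) s = s a - s b"
| "aval q inp (Times a b) s = s a * s b"
| "aval q inp (Quot a b) s = s a div s b"
| "aval q inp (Rem a b) s = s a mod s b"
| "aval q inp (ShL a b) s = s a * q ^ s b"
| "aval q inp (ShR a b) s = s a div q ^ s b"
| "aval q inp (Inp a b) s = inp (s a) (s b)"

fun acost :: "nat \<Rightarrow> aexp \<Rightarrow> (nat \<Rightarrow> nat) \<Rightarrow> nat" where
  "acost q (Cnst c) s = qlen q c"
| "acost q (Reg a) s = qlen q (s a)"
| "acost q (Plus a b) s = max (qlen q (s a)) (qlen q (s b)) + 1"
| "acost q (Minus a b) s = max (qlen q (s a)) (qlen q (s b)) + 1"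
| "acost q (Times a b) s = mcost q (s a) (s b)"
| "acost q (Quot a b) s = mcost q (s a) (s b)"
| "acost q (Rem a b) s = mcost q (s a) (s b)"
| "acost q (ShL a b) s = qlen q (s a) + s b + qlen q (s b)"
| "acost q (ShR a b) s = qlen q (s a) + qlen q (s b)"
| "acost q (Inp a b) s = qlen q (s a) + qlen q (s b) + 1"

definition cmpcost :: "nat \<Rightarrow> nat \<Rightarrow> nat \<Rightarrow> (nat \<Rightarrow> nat) \<Rightarrow> nat" where
  "cmpcost q a b s = max (qlen q (s a)) (qlen q (s b)) + 1"

inductive big :: "nat \<Rightarrow> (nat \<Rightarrow> nat \<Rightarrow> nat) \<Rightarrow> com \<Rightarrow> (nat \<Rightarrow> nat) \<Rightarrow> nat \<Rightarrow> (nat \<Rightarrow> nat) \<Rightarrow> bool"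
  for q inp where
  BSkip: "big q inp Skip s 1 s"
| BAssign: "big q inp (Assign x a) s (1 + acost q a s) (s(x := aval q inp a s))"
| BSeq: "big q inp c1 s t1 s1 \<Longrightarrow> big q inp c2 s1 t2 s2 \<Longrightarrow> big q inp (Seq c1 c2) s (t1 + t2) s2"
| BIfT: "s a < s b \<Longrightarrow> big q inp c1 s t s' \<Longrightarrow> big q inp (If a b c1 c2) s (cmpcost q a b s + t) s'"
| BIfF: "\<not> s a < s b \<Longrightarrow> big q inp c2 s t s' \<Longrightarrow> big q inp (If a b c1 c2) s (cmpcost q a b s + t) s'"
| BWhileF: "\<not> s a < s b \<Longrightarrow> big q inp (While a b c) s (cmpcost q a b s) s"
| BWhileT: "s a < s b \<Longrightarrow> big q inp c s t1 s1 \<Longrightarrow> big q inp (While a b c) s1 t2 s2 \<Longrightarrow>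
            big q inp (While a b c) s (cmpcost q a b s + t1 + t2) s2"

text \<open>Initial state: register 1 holds n, register 2 holds k, all others 0.
  The output is read from register 0.\<close>
definition init :: "nat \<Rightarrow> nat \<Rightarrow> nat \<Rightarrow> nat" where
  "init n k = (\<lambda>_. 0)(1 := n, 2 := k)"

end

theory Submission
  imports Defs
begin

text \<open>A register program reads the columns X_n, ..., X_1 of EXT(X) once, keeping w_(j-1) and
  the Gaussian coefficient [n - j, k - w_(j-1)]_q in registers. Passing from column j to column
  j + 1 changes the coefficient by one of the identities
  [m+1, r+1]_q (q^(r+1) - 1) = [m, r]_q (q^(m+1) - 1) (if v_j = 1) or
  [m, r]_q (q^(m+1) - 1) = [m+1, r]_q (q^(m+1-r) - 1) (if v_j = 0), that is, by one multiplication
  and one exact division. All coefficients are below q^(k(n-k)) and one operand of each product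
  or quotient is below q^n, so every update costs O(k(n-k) log n log log n), as does each of
  the k steps building the initial coefficient [n - 1, k]_q. A column {X_j} is read digit by
  digit, in O(kn), only when v_j = 0; the loop stops once k - w_(j-1) = n - j with v_j = 0,
  since all later terms vanish, so fewer than n - k columns are read.

  The program is correct for every input whose top row is 0/1 and whose entries are below q.\<close>

section \<open>Gaussian binomial coefficients\<close>

fun qbinom :: "nat \<Rightarrow> nat \<Rightarrow> nat \<Rightarrow> nat" where
  "qbinom q m 0 = 1"
| "qbinom q 0 (Suc r) = 0"
| "qbinom q (Suc m) (Suc r) = qbinom q m r + q ^ Suc r * qbinom q m (Suc r)"

definition qfalling :: "nat \<Rightarrow> nat \<Rightarrow> nat \<Rightarrow> real" where
  "qfalling q m r = (\<Prod>i<r. real q ^ (m - i) - 1)"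

definition qfact :: "nat \<Rightarrow> nat \<Rightarrow> real" where
  "qfact q r = (\<Prod>i<r. real q ^ Suc i - 1)"

lemma qfalling_0 [simp]: "qfalling q m 0 = 1"
  by (simp add: qfalling_def)

lemma qfalling_Suc: "qfalling q m (Suc r) = qfalling q m r * (real q ^ (m - r) - 1)"
  by (simp add: qfalling_def)

lemma qfalling_Suc_Suc: "qfalling q (Suc m) (Suc r) = (real q ^ Suc m - 1) * qfalling q m r"
  unfolding qfalling_def by (subst prod.lessThan_Suc_shift) simp

lemma qfalling_eq_0: "m < r \<Longrightarrow> qfalling q m r = 0"
  unfolding qfalling_def by (rule prod_zero) (auto intro: bexI[of _ m])

lemma qfact_0 [simp]: "qfact q 0 = 1"
  by (simp add: qfact_def)

lemma qfact_Suc: "qfact q (Suc r) = qfact q r * (real q ^ Suc r - 1)"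
  by (simp add: qfact_def)

lemma power_minus_one_pos:
  assumes "2 \<le> q" and "0 < e"
  shows "0 < real q ^ e - 1" and "0 < q ^ e - 1"
proof -
  have "1 < q ^ e"
    by (rule one_less_power) (use assms in auto)
  then show "0 < real q ^ e - 1" and "0 < q ^ e - 1"
    by (simp_all flip: of_nat_power)
qed

lemma qfact_pos: "2 \<le> q \<Longrightarrow> 0 < qfact q r"
  unfolding qfact_def by (intro prod_pos power_minus_one_pos(1)) auto

lemma qbinom_eq_0: "m < r \<Longrightarrow> qbinom q m r = 0"
  by (induction q m r rule: qbinom.induct) auto

lemma qbinom_real: "2 \<le> q \<Longrightarrow> real (qbinom q m r) = qfalling q m r / qfact q r"
proof (induction q m r rule: qbinom.induct)
  case (1 q m)
  then show ?case by simp
next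
  case (2 q r)
  then show ?case by (simp add: qfalling_eq_0)
next
  case (3 q m r)
  show ?case
  proof (cases "r \<le> m")
    case True
    have F: "qfact q r > 0" and d: "real q ^ Suc r - 1 > 0"
      using qfact_pos power_minus_one_pos[of q "Suc r"] 3 by auto
    have e: "real q ^ Suc r * real q ^ (m - r) = real q ^ Suc m"
      using True by (simp flip: power_add)
    have "real (qbinom q (Suc m) (Suc r))
        = qfalling q m r / qfact q r + real q ^ Suc r * (qfalling q m r * (real q ^ (m - r) - 1)
            / (qfact q r * (real q ^ Suc r - 1)))"
      using 3 by (simp add: qfalling_Suc qfact_Suc)
    also have "\<dots> = qfalling q m r * (real q ^ Suc r - 1 + (real q ^ Suc r * real q ^ (m - r) - real q ^ Suc r))
        / (qfact q r * (real q ^ Suc r - 1))"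
      using F d by (simp add: field_simps)
    also have "\<dots> = qfalling q (Suc m) (Suc r) / qfact q (Suc r)"
      unfolding e by (simp add: qfalling_Suc_Suc qfact_Suc algebra_simps)
    finally show ?thesis .
  next
    case False
    then show ?thesis using 3 by (simp add: qfalling_eq_0 qfalling_Suc_Suc)
  qed
qed

lemma gbinom_eq_qbinom: "2 \<le> q \<Longrightarrow> gbinom q m r = qbinom q m r"
proof (cases "r > m")
  case True
  then show ?thesis by (simp add: gbinom_def qbinom_eq_0)
next
  case False
  assume q: "2 \<le> q"
  have "(\<Prod>i<r. real q ^ (r - i) - 1) = qfact q r"
    unfolding qfact_def
    by (rule trans[OF _ prod.nat_diff_reindex[of "\<lambda>i. real q ^ Suc i - 1" r]])
      (rule prod.cong, auto simp: Suc_diff_Suc)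
  then have "(\<Prod>i<r. (real q ^ (m - i) - 1) / (real q ^ (r - i) - 1)) = real (qbinom q m r)"
    by (simp add: prod_dividef qfalling_def qbinom_real[OF q])
  then show ?thesis using False by (simp add: gbinom_def)
qed

lemma real_power_minus_one: "2 \<le> q \<Longrightarrow> real (q ^ e - 1) = real q ^ e - 1"
  by (simp add: of_nat_diff)

lemma qbinom_absorption:
  assumes "2 \<le> q"
  shows "qbinom q (Suc m) (Suc r) * (q ^ Suc r - 1) = qbinom q m r * (q ^ Suc m - 1)"
proof -
  have F: "qfact q r > 0" and d: "real q ^ Suc r - 1 > 0"
    using qfact_pos power_minus_one_pos(1)[of q "Suc r"] assms by auto
  have "real (qbinom q (Suc m) (Suc r)) * (real q ^ Suc r - 1)
      = (real q ^ Suc m - 1) * qfalling q m r / (qfact q r * (real q ^ Suc r - 1)) * (real q ^ Suc r - 1)"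
    by (simp only: qbinom_real[OF assms] qfalling_Suc_Suc qfact_Suc)
  also have "\<dots> = real (qbinom q m r) * (real q ^ Suc m - 1)"
    using F d by (simp add: qbinom_real[OF assms] del: qbinom.simps)
  finally have "real (qbinom q (Suc m) (Suc r) * (q ^ Suc r - 1)) = real (qbinom q m r * (q ^ Suc m - 1))"
    by (simp only: of_nat_mult real_power_minus_one[OF assms])
  then show ?thesis
    by (simp only: of_nat_eq_iff)
qed

lemma qbinom_upper_Suc:
  assumes "2 \<le> q"
  shows "qbinom q m r * (q ^ Suc m - 1) = qbinom q (Suc m) r * (q ^ (Suc m - r) - 1)"
proof (cases r)
  case 0
  then show ?thesis by simp
next
  case (Suc r')
  have "real (qbinom q m r) * (real q ^ Suc m - 1)
      = qfalling q m r' * (real q ^ (m - r') - 1) * (real q ^ Suc m - 1) / qfact q r"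
    using Suc by (simp add: qbinom_real[OF assms] qfalling_Suc del: qbinom.simps)
  also have "\<dots> = real (qbinom q (Suc m) r) * (real q ^ (Suc m - r) - 1)"
    using Suc by (simp add: qbinom_real[OF assms] qfalling_Suc_Suc del: qbinom.simps)
  finally have "real (qbinom q m r * (q ^ Suc m - 1)) = real (qbinom q (Suc m) r * (q ^ (Suc m - r) - 1))"
    by (simp only: of_nat_mult real_power_minus_one[OF assms])
  then show ?thesis
    by (simp only: of_nat_eq_iff)
qed

lemma qbinom_Suc_Suc_eq_div:
  assumes "2 \<le> q"
  shows "qbinom q (Suc m) (Suc r) = qbinom q m r * (q ^ Suc m - 1) div (q ^ Suc r - 1)"
  unfolding qbinom_absorption[OF assms, symmetric]
  using power_minus_one_pos(2)[OF assms, of "Suc r"] by (simp del: qbinom.simps)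

lemma qbinom_eq_div_Suc_Suc:
  assumes "2 \<le> q"
  shows "qbinom q m r = qbinom q (Suc m) (Suc r) * (q ^ Suc r - 1) div (q ^ Suc m - 1)"
  unfolding qbinom_absorption[OF assms]
  using power_minus_one_pos(2)[OF assms, of "Suc m"] by (simp del: qbinom.simps)

lemma qbinom_eq_div_Suc:
  assumes "2 \<le> q"
  shows "qbinom q m r = qbinom q (Suc m) r * (q ^ (Suc m - r) - 1) div (q ^ Suc m - 1)"
  unfolding qbinom_upper_Suc[OF assms, symmetric]
  using power_minus_one_pos(2)[OF assms, of "Suc m"] by (simp del: qbinom.simps)

lemma qbinom_le_power:
  assumes "2 \<le> q" and "r \<le> m"
  shows "qbinom q m r \<le> q ^ (r * (m - r + 1))"
  using assms(2)
proof (induction r arbitrary: m)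
  case 0
  then show ?case by simp
next
  case (Suc r)
  then obtain m' where m: "m = Suc m'" and rm: "r \<le> m'" by (cases m) auto
  have "q ^ Suc m' - 1 \<le> q ^ (m' - r + 1) * (q ^ Suc r - 1)"
  proof -
    have "m' - r + 1 + Suc r = m' + 2"
      using rm by simp
    then have "q ^ (m' - r + 1) * (q ^ Suc r - 1) = q ^ (m' + 2) - q ^ (m' - r + 1)"
      by (simp only: diff_mult_distrib2 mult_1_right flip: power_add)
    moreover have "q ^ (m' - r + 1) \<le> q ^ (m' + 1)"
      using assms by (intro power_increasing) auto
    moreover have "q ^ (m' + 1) * 2 \<le> q ^ (m' + 2)"
      using assms by simp
    ultimately show ?thesis by (simp only: power_Suc[symmetric] Suc_eq_plus1)
  qed
  then have "qbinom q m (Suc r) * (q ^ Suc r - 1)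
      \<le> q ^ (r * (m' - r + 1)) * (q ^ (m' - r + 1) * (q ^ Suc r - 1))"
    unfolding m qbinom_absorption[OF assms(1)] using Suc.IH[OF rm] by (intro mult_le_mono)
  also have "\<dots> = q ^ (Suc r * (m - Suc r + 1)) * (q ^ Suc r - 1)"
  proof -
    have "Suc r * (m - Suc r + 1) = r * (m' - r + 1) + (m' - r + 1)"
      using m rm by simp
    then show ?thesis by (simp only: power_add mult.assoc)
  qed
  finally show ?case
    using power_minus_one_pos(2)[OF assms(1), of "Suc r"] by simp
qed

section \<open>Cost-bounded executions\<close>

definition runs_within ::
    "nat \<Rightarrow> (nat \<Rightarrow> nat \<Rightarrow> nat) \<Rightarrow> com \<Rightarrow> (nat \<Rightarrow> nat) \<Rightarrow> (nat \<Rightarrow> nat) \<Rightarrow> nat \<Rightarrow> bool" where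
  "runs_within q inp c s s' b \<longleftrightarrow> (\<exists>t. big q inp c s t s' \<and> t \<le> b)"

lemma runs_within_mono:
  "runs_within q inp c s s' b \<Longrightarrow> b \<le> b' \<Longrightarrow> runs_within q inp c s s' b'"
  unfolding runs_within_def by auto

lemma runs_within_Skip: "runs_within q inp Skip s s 1"
  unfolding runs_within_def by (auto intro: big.intros)

lemma runs_within_Assign:
  "acost q a s \<le> K \<Longrightarrow> s' = s(x := aval q inp a s) \<Longrightarrow> runs_within q inp (Assign x a) s s' (Suc K)"
  unfolding runs_within_def by (auto intro!: exI big.intros)

lemma runs_within_eq_start:
  "s = s1 \<Longrightarrow> runs_within q inp c s1 s' b \<Longrightarrow> runs_within q inp c s s' b"
  by simp

lemma runs_within_eq_state:
  "runs_within q inp c s s1 b \<Longrightarrow> s1 = s2 \<Longrightarrow> runs_within q inp c s s2 b"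
  by simp

lemma runs_within_Seq:
  "runs_within q inp c1 s s1 b1 \<Longrightarrow> runs_within q inp c2 s1 s2 b2 \<Longrightarrow>
   runs_within q inp (Seq c1 c2) s s2 (b1 + b2)"
  unfolding runs_within_def by (meson big.intros(3) add_mono)

lemma runs_within_Seq_Assign:
  "acost q a s \<le> K \<Longrightarrow> aval q inp a s = v \<Longrightarrow> runs_within q inp c (s(x := v)) s' b \<Longrightarrow>
   runs_within q inp (Seq (Assign x a) c) s s' (Suc K + b)"
  by (rule runs_within_Seq[OF runs_within_Assign]) auto

lemma runs_within_IfT:
  "s a < s b \<Longrightarrow> cmpcost q a b s \<le> K \<Longrightarrow> runs_within q inp c1 s s' b1 \<Longrightarrow>
   runs_within q inp (If a b c1 c2) s s' (K + b1)"
  unfolding runs_within_def by (meson big.intros(4) add_mono)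

lemma runs_within_IfF:
  "\<not> s a < s b \<Longrightarrow> cmpcost q a b s \<le> K \<Longrightarrow> runs_within q inp c2 s s' b1 \<Longrightarrow>
   runs_within q inp (If a b c1 c2) s s' (K + b1)"
  unfolding runs_within_def by (meson big.intros(5) add_mono)

lemma runs_within_WhileF:
  "\<not> s a < s b \<Longrightarrow> cmpcost q a b s \<le> K \<Longrightarrow> runs_within q inp (While a b c) s s K"
  unfolding runs_within_def by (auto intro!: exI big.intros(6))

lemma runs_within_WhileT:
  "s a < s b \<Longrightarrow> cmpcost q a b s \<le> K \<Longrightarrow> runs_within q inp c s s1 b1 \<Longrightarrow>
   runs_within q inp (While a b c) s1 s2 b2 \<Longrightarrow> runs_within q inp (While a b c) s s2 (K + b1 + b2)"
  unfolding runs_within_def by (meson big.intros(7) add_mono)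

section \<open>Lengths of q-ary numbers\<close>

lemma qlen_le: "2 \<le> q \<Longrightarrow> x < q ^ e \<Longrightarrow> 1 \<le> e \<Longrightarrow> qlen q x \<le> e"
  unfolding qlen_def by (auto intro: floorlog_leI)

lemma qlen_le_self: "2 \<le> q \<Longrightarrow> qlen q x \<le> Suc x"
  using qlen_le[of q x "Suc x"] power_gt_expt[of q "Suc x"] by simp

lemma qlen_0 [simp]: "qlen q 0 = 1"
  by (simp add: qlen_def floorlog_def)

lemma qlen_1 [simp]: "2 \<le> q \<Longrightarrow> qlen q (Suc 0) = 1"
  by (simp add: qlen_def floorlog_def)

lemma lg_mono: "a \<le> b \<Longrightarrow> lg a \<le> lg b"
  unfolding lg_def using floorlog_mono[of a b 2] by auto

lemma lg_ge_1: "1 \<le> lg a"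
  unfolding lg_def by auto

lemma mcost_le:
  assumes "2 \<le> q" and "qlen q x \<le> L" and "qlen q y \<le> L" and "x < q ^ n \<or> y < q ^ n" and "1 \<le> n"
  shows "mcost q x y \<le> L * (lg n * lg (lg n))"
proof -
  define b where "b = min (qlen q x) (qlen q y)"
  have "b \<le> n"
    using assms(4) qlen_le[OF assms(1) _ assms(5)] unfolding b_def by (force simp: min_def)
  then have "lg b \<le> lg n" and "lg (lg b) \<le> lg (lg n)"
    using lg_mono by auto
  moreover have "max (qlen q x) (qlen q y) \<le> L"
    using assms(2,3) by simp
  ultimately show ?thesis
    unfolding mcost_def Let_def b_def[symmetric] mult.assoc by (intro mult_le_mono) auto
qed

section \<open>The index program\<close>

text \<open>Registers: 0 accumulates the index; 1 and 2 hold n and k; in round j of the main loop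
  3 holds the input column position n + 1 - j of X_j, 4 holds m = n - j, 5 holds r = k - w_(j-1),
  6 holds the Gaussian coefficient [m, r]_q, 7 holds w_(j-1), 8 the loop flag and 18 the bit v_j;
  9 and 10 hold the constants 0 and 1. Registers 11-15 and 19-23 are scratch registers.\<close>

definition read_digit :: com where
  "read_digit = Seq (Assign 20 (Plus 20 10)) (Seq (Assign 21 (Inp 20 3))
     (Seq (Assign 19 (ShL 19 10)) (Assign 19 (Plus 19 21))))"

definition read_column :: com where
  "read_column = While 20 2 read_digit"

definition add_lead_term :: com where
  "add_lead_term = Seq (Assign 19 (ShL 6 5)) (Assign 0 (Plus 0 19))"

definition add_column_term :: com where
  "add_column_term = Seq (Assign 19 (Cnst 0)) (Seq (Assign 20 (Cnst 0)) (Seq read_column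
     (Seq (Assign 19 (ShR 19 7)) (Seq (Assign 19 (Times 19 6)) (Assign 0 (Plus 0 19))))))"

definition add_term :: com where
  "add_term = If 9 18 add_lead_term add_column_term"

definition advance :: com where
  "advance = Seq (Assign 4 (Minus 4 10)) (Assign 3 (Minus 3 10))"

definition drop_row :: com where
  "drop_row = Seq (Assign 22 (ShL 10 5)) (Seq (Assign 22 (Minus 22 10)) (Seq (Assign 6 (Times 6 22))
     (Seq (Assign 23 (ShL 10 4)) (Seq (Assign 23 (Minus 23 10)) (Seq (Assign 6 (Quot 6 23))
     (Assign 5 (Minus 5 10)))))))"

definition update_lead :: com where
  "update_lead = Seq (If 9 5 drop_row Skip) (Seq (Assign 7 (Plus 7 10)) advance)"

definition drop_column :: com where
  "drop_column = Seq (Assign 22 (Minus 4 5)) (Seq (Assign 22 (ShL 10 22)) (Seq (Assign 22 (Minus 22 10))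
     (Seq (Assign 6 (Times 6 22)) (Seq (Assign 23 (ShL 10 4)) (Seq (Assign 23 (Minus 23 10))
     (Seq (Assign 6 (Quot 6 23)) advance))))))"

definition update_nonlead :: com where
  "update_nonlead = If 5 4 drop_column (Assign 8 (Cnst 0))"

definition update :: com where
  "update = If 9 4 (If 9 18 update_lead update_nonlead) (Assign 8 (Cnst 0))"

definition index_step :: com where
  "index_step = Seq (Assign 18 (Inp 9 3)) (Seq add_term update)"

definition index_loop :: com where
  "index_loop = While 9 8 index_step"

definition init_qbinom_step :: com where
  "init_qbinom_step = Seq (Assign 12 (Plus 12 10)) (Seq (Assign 13 (Plus 11 12))
     (Seq (Assign 14 (ShL 10 13)) (Seq (Assign 14 (Minus 14 10)) (Seq (Assign 6 (Times 6 14))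
     (Seq (Assign 15 (ShL 10 12)) (Seq (Assign 15 (Minus 15 10)) (Assign 6 (Quot 6 15))))))))"

definition init_qbinom :: com where
  "init_qbinom = While 12 2 init_qbinom_step"

definition prepare :: com where
  "prepare = Seq (Assign 10 (Cnst 1)) (Seq (Assign 6 (Cnst 1)) (Seq (Assign 11 (Minus 1 2))
     (Seq (Assign 11 (Minus 11 10)) (Seq (Assign 12 (Cnst 0)) init_qbinom))))"

definition init_counters :: com where
  "init_counters = Seq (Assign 3 (Reg 1)) (Seq (Assign 4 (Minus 1 10)) (Seq (Assign 5 (Reg 2))
     (Seq (Assign 7 (Cnst 0)) (Assign 8 (Cnst 1)))))"

definition index_main :: com where
  "index_main = Seq prepare (Seq init_counters index_loop)"

definition index_prog :: com where
  "index_prog = If 9 2 (If 2 1 index_main Skip) Skip"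

section \<open>Correctness and cost of the index program\<close>

locale index_input =
  fixes q :: nat and inp :: "nat \<Rightarrow> nat \<Rightarrow> nat" and n k :: nat
  assumes q_ge_2: "2 \<le> q" and k_pos: "0 < k" and k_less_n: "k < n"
    and bit_row: "\<And>p. inp 0 p \<le> 1" and digit_less: "\<And>t p. inp t p < q"
begin

lemma n_pos: "1 \<le> n"
  using k_less_n by simp

lemma Suc_0_le_n [simp]: "Suc 0 \<le> n"
  using n_pos by simp

lemma qlen_Suc_0 [simp]: "qlen q (Suc 0) = 1"
  using q_ge_2 by simp

lemma power_mono_q: "a \<le> b \<Longrightarrow> q ^ a \<le> q ^ b"
  using q_ge_2 by (intro power_increasing) auto

lemma power_strict_mono_q: "a < b \<Longrightarrow> q ^ a < q ^ b"
  using q_ge_2 by (intro power_strict_increasing) auto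

lemma less_power_n: "x \<le> n \<Longrightarrow> x < q ^ n"
  using power_gt_expt[of q n] q_ge_2 by simp

lemma qlen_le_n: "x < q ^ n \<Longrightarrow> qlen q x \<le> n"
  using qlen_le[OF q_ge_2 _ n_pos] .

lemma qlen_small: "x \<le> n \<Longrightarrow> qlen q x \<le> n"
  using qlen_le_n less_power_n by blast

definition col_prefix :: "nat \<Rightarrow> nat \<Rightarrow> nat" where
  "col_prefix p t = (\<Sum>u=1..t. inp u p * q ^ (t - u))"

lemma col_prefix_0 [simp]: "col_prefix p 0 = 0"
  by (simp add: col_prefix_def)

lemma col_prefix_Suc: "col_prefix p (Suc t) = col_prefix p t * q + inp (Suc t) p"
proof -
  have "(\<Sum>u=1..t. inp u p * q ^ (Suc t - u)) = col_prefix p t * q"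
    unfolding col_prefix_def sum_distrib_right by (rule sum.cong) (auto simp: Suc_diff_le)
  then show ?thesis
    unfolding col_prefix_def by simp
qed

lemma col_prefix_less: "col_prefix p t < q ^ t"
proof (induction t)
  case 0
  then show ?case by simp
next
  case (Suc t)
  have "col_prefix p t * q + inp (Suc t) p < (col_prefix p t + 1) * q"
    using digit_less[of "Suc t" p] by simp
  also have "\<dots> \<le> q ^ t * q"
    using Suc by (intro mult_le_mono) auto
  finally show ?case
    by (simp add: col_prefix_Suc mult.commute)
qed

lemma read_digit_runs:
  assumes "s 3 = p" and "s 10 = 1" and "s 20 = t" and "s 19 = col_prefix p t" and "p \<le> n" and "t < k"
  shows "runs_within q inp read_digit s
    (s(20 := Suc t, 21 := inp (Suc t) p, 19 := col_prefix p t * q, 19 := col_prefix p (Suc t)))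
    (4 * (2 * n + 3))"
proof -
  have t: "t \<le> n" "Suc t \<le> n"
    using assms(6) k_less_n by auto
  have "col_prefix p (Suc t) < q ^ n"
    using col_prefix_less[of p "Suc t"] power_mono_q[of "Suc t" n] t by simp
  then have small: "qlen q x \<le> n" if "x \<le> col_prefix p (Suc t)" for x
    using that by (intro qlen_le_n) simp
  have "qlen q (col_prefix p t) \<le> n"
    using col_prefix_less[of p t] power_mono_q[of t n] t by (intro qlen_le_n) linarith
  then have digits: "qlen q (col_prefix p t) \<le> n" "qlen q (col_prefix p t * q) \<le> n"
      "qlen q (inp (Suc t) p) \<le> n"
    by (auto simp: col_prefix_Suc intro!: small)
  have counters: "qlen q t \<le> n" "qlen q (Suc t) \<le> n" "qlen q p \<le> n"
    using t assms(5) by (auto intro!: qlen_small)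
  show ?thesis
    unfolding read_digit_def
    apply (rule runs_within_mono)
     apply (rule runs_within_Seq_Assign[where K = "2 * n + 2"],
        use assms digits counters in \<open>simp add: max_def\<close>, use assms in simp)+
     apply (rule runs_within_Assign[where K = "2 * n + 2"])
    using assms digits counters by (simp_all add: col_prefix_Suc max_def)
qed

lemma read_column_runs:
  assumes "s 2 = k" and "s 10 = 1" and "s 3 = p" and "p \<le> n"
    and "t \<le> k" and "s 20 = t" and "s 19 = col_prefix p t"
  shows "\<exists>s'. runs_within q inp read_column s s' ((k - t) * (9 * n + 13) + (n + 1))
    \<and> s' 19 = col_prefix p k \<and> (\<forall>x. x \<notin> {19, 20, 21} \<longrightarrow> s' x = s x)"
  using assms
proof (induction "k - t" arbitrary: t s)
  case 0
  then have "t = k" and "cmpcost q 20 2 s \<le> n + 1"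
    using k_less_n by (auto simp: cmpcost_def intro!: qlen_small)
  with 0 have "runs_within q inp read_column s s (n + 1)"
    unfolding read_column_def by (intro runs_within_WhileF) auto
  with 0 \<open>t = k\<close> show ?case
    by auto
next
  case (Suc d)
  then have t: "t < k"
    by simp
  define s1 where "s1 = s(20 := Suc t, 21 := inp (Suc t) p, 19 := col_prefix p t * q,
    19 := col_prefix p (Suc t))"
  have "runs_within q inp read_digit s s1 (4 * (2 * n + 3))"
    unfolding s1_def using Suc.prems t by (intro read_digit_runs)
  moreover have "\<exists>s'. runs_within q inp read_column s1 s' ((k - Suc t) * (9 * n + 13) + (n + 1))
      \<and> s' 19 = col_prefix p k \<and> (\<forall>x. x \<notin> {19, 20, 21} \<longrightarrow> s' x = s1 x)"
    by (rule Suc.hyps(1)) (use Suc t in \<open>simp_all add: s1_def\<close>)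
  then obtain s' where "runs_within q inp read_column s1 s' ((k - Suc t) * (9 * n + 13) + (n + 1))"
      and "s' 19 = col_prefix p k" and "\<forall>x. x \<notin> {19, 20, 21} \<longrightarrow> s' x = s1 x"
    by blast
  moreover have "cmpcost q 20 2 s \<le> n + 1"
    using Suc.prems t k_less_n by (auto simp: cmpcost_def intro!: qlen_small)
  ultimately have "runs_within q inp read_column s s'
      ((n + 1) + 4 * (2 * n + 3) + ((k - Suc t) * (9 * n + 13) + (n + 1)))"
    using Suc.prems t unfolding read_column_def by (intro runs_within_WhileT) auto
  also have "(n + 1) + 4 * (2 * n + 3) + ((k - Suc t) * (9 * n + 13) + (n + 1))
      = (k - t) * (9 * n + 13) + (n + 1)"
    using t by (simp add: Suc_diff_Suc[symmetric] algebra_simps)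
  finally show ?case
    using \<open>s' 19 = col_prefix p k\<close> \<open>\<forall>x. x \<notin> {19, 20, 21} \<longrightarrow> s' x = s1 x\<close>
    by (auto simp: s1_def)
qed

text \<open>Every number the program handles has fewer than len_bound q-ary digits, and one of the
  factors of every multiplication and division is below q^n; so each elementary step
  costs at most op_cost.\<close>

definition len_bound :: nat where
  "len_bound = 4 * (k * (n - k))"

definition op_cost :: nat where
  "op_cost = 3 * (len_bound * (lg n * lg (lg n)))"

lemma len_bound_ge:
  "1 \<le> len_bound" "n \<le> len_bound" "k * (n - k) + n \<le> len_bound" "k + k * (n - k) + n \<le> len_bound"
proof -
  have "1 \<le> k * (n - k)" "k \<le> k * (n - k)" "n - k \<le> k * (n - k)"
    using k_pos k_less_n by auto
  then show "1 \<le> len_bound" "n \<le> len_bound" "k * (n - k) + n \<le> len_bound"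
      "k + k * (n - k) + n \<le> len_bound"
    unfolding len_bound_def by linarith+
qed

lemma op_cost_ge: "3 * len_bound \<le> op_cost" "n \<le> op_cost" "1 \<le> op_cost"
proof -
  have "1 \<le> lg n * lg (lg n)"
    using lg_ge_1[of n] lg_ge_1[of "lg n"] by simp
  then have "3 * len_bound \<le> op_cost"
    unfolding op_cost_def by simp
  then show "3 * len_bound \<le> op_cost" "n \<le> op_cost" "1 \<le> op_cost"
    using len_bound_ge by linarith+
qed

lemma qlen_le_len_bound: "x < q ^ len_bound \<Longrightarrow> qlen q x \<le> len_bound"
  using qlen_le[OF q_ge_2 _ len_bound_ge(1)] .

lemma less_power_len_bound: "x < q ^ n \<Longrightarrow> x < q ^ len_bound"
  using power_mono_q[OF len_bound_ge(2)] by simp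

lemma mcost_le_op_cost:
  "x < q ^ len_bound \<Longrightarrow> y < q ^ len_bound \<Longrightarrow> x < q ^ n \<or> y < q ^ n \<Longrightarrow> mcost q x y \<le> op_cost"
  using mcost_le[OF q_ge_2 qlen_le_len_bound qlen_le_len_bound _ n_pos, of x y] op_cost_def by auto

lemma acost_Plus_le: "s a < q ^ len_bound \<Longrightarrow> s b < q ^ len_bound \<Longrightarrow> acost q (Plus a b) s \<le> op_cost"
  using qlen_le_len_bound[of "s a"] qlen_le_len_bound[of "s b"] op_cost_ge by auto

lemma acost_Minus_le: "s a < q ^ len_bound \<Longrightarrow> s b < q ^ len_bound \<Longrightarrow> acost q (Minus a b) s \<le> op_cost"
  using qlen_le_len_bound[of "s a"] qlen_le_len_bound[of "s b"] op_cost_ge by auto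

lemma acost_ShL_le: "s a < q ^ len_bound \<Longrightarrow> s b \<le> n \<Longrightarrow> acost q (ShL a b) s \<le> op_cost"
  using qlen_le_len_bound[of "s a"] qlen_small[of "s b"] op_cost_ge len_bound_ge by auto

lemma acost_ShR_le: "s a < q ^ len_bound \<Longrightarrow> s b \<le> n \<Longrightarrow> acost q (ShR a b) s \<le> op_cost"
  using qlen_le_len_bound[of "s a"] qlen_small[of "s b"] op_cost_ge len_bound_ge by auto

lemma acost_Times_le:
  "s a < q ^ len_bound \<Longrightarrow> s b < q ^ n \<Longrightarrow> acost q (Times a b) s \<le> op_cost"
  using mcost_le_op_cost less_power_len_bound by simp

lemma acost_Times_le_left:
  "s a < q ^ n \<Longrightarrow> s b < q ^ len_bound \<Longrightarrow> acost q (Times a b) s \<le> op_cost"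
  using mcost_le_op_cost less_power_len_bound by simp

lemma acost_Quot_le:
  "s a < q ^ len_bound \<Longrightarrow> s b < q ^ n \<Longrightarrow> acost q (Quot a b) s \<le> op_cost"
  using mcost_le_op_cost less_power_len_bound by simp

lemma acost_Cnst_le: "c \<le> n \<Longrightarrow> acost q (Cnst c) s \<le> op_cost"
  using qlen_small[of c] op_cost_ge by auto

lemma acost_Reg_le: "s a \<le> n \<Longrightarrow> acost q (Reg a) s \<le> op_cost"
  using qlen_small[of "s a"] op_cost_ge by auto

lemma acost_Inp_le: "s a \<le> n \<Longrightarrow> s b \<le> n \<Longrightarrow> acost q (Inp a b) s \<le> op_cost"
  using qlen_small[of "s a"] qlen_small[of "s b"] op_cost_ge len_bound_ge by auto

lemmas acost_le = acost_Plus_le acost_Minus_le acost_ShL_le acost_ShR_le acost_Times_le acost_Quot_le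
  acost_Cnst_le acost_Reg_le

lemma cmpcost_le: "s a \<le> n \<Longrightarrow> s b \<le> n \<Longrightarrow> cmpcost q a b s \<le> op_cost"
  unfolding cmpcost_def using qlen_small[of "s a"] qlen_small[of "s b"] op_cost_ge len_bound_ge
  by (auto simp: max_def)

lemma runs_within_IfT_small:
  "s a < s b \<Longrightarrow> s b \<le> n \<Longrightarrow> runs_within q inp c1 s s' b1 \<Longrightarrow>
   runs_within q inp (If a b c1 c2) s s' (op_cost + b1)"
  by (rule runs_within_IfT) (auto intro: cmpcost_le)

lemma runs_within_IfF_small:
  "\<not> s a < s b \<Longrightarrow> s a \<le> n \<Longrightarrow> runs_within q inp c2 s s' b2 \<Longrightarrow>
   runs_within q inp (If a b c1 c2) s s' (op_cost + b2)"
  by (rule runs_within_IfF) (auto intro: cmpcost_le)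

lemma small_less_power_len_bound: "x \<le> n \<Longrightarrow> x < q ^ len_bound"
  using less_power_len_bound less_power_n by blast

lemma Suc_0_less_power_len_bound [simp]: "Suc 0 < q ^ len_bound"
  using small_less_power_len_bound[of 1] n_pos by simp

lemma power_minus_one_less: "e \<le> n \<Longrightarrow> q ^ e - 1 < q ^ n"
  using power_mono_q[of e n] q_ge_2 by (simp add: less_eq_Suc_le)

lemma qbinom_le_power_k_n_k:
  "r \<le> k \<Longrightarrow> m - r + 1 \<le> n - k \<Longrightarrow> qbinom q m r \<le> q ^ (k * (n - k))"
proof (cases "r \<le> m")
  case True
  assume "r \<le> k" "m - r + 1 \<le> n - k"
  then have "qbinom q m r \<le> q ^ (r * (m - r + 1))"
    using qbinom_le_power[OF q_ge_2 True] by simp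
  also have "\<dots> \<le> q ^ (k * (n - k))"
    using \<open>r \<le> k\<close> \<open>m - r + 1 \<le> n - k\<close> by (intro power_mono_q mult_le_mono)
  finally show ?thesis .
qed (simp add: qbinom_eq_0)

lemma coefficient_less:
  assumes "G \<le> q ^ (k * (n - k))"
  shows "G < q ^ len_bound"
proof -
  have "q ^ (k * (n - k)) < q ^ len_bound"
    using len_bound_ge(3) k_less_n by (intro power_strict_mono_q) linarith
  with assms show ?thesis by linarith
qed

lemma coefficient_mult_less:
  assumes "G \<le> q ^ (k * (n - k))" and "e \<le> n"
  shows "G * (q ^ e - 1) < q ^ len_bound"
proof -
  have "G * (q ^ e - 1) \<le> q ^ (k * (n - k)) * (q ^ e - 1)"
    using assms(1) by (rule mult_le_mono1)
  also have "\<dots> < q ^ (k * (n - k)) * q ^ n"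
    using power_minus_one_less[OF assms(2)] q_ge_2 by (intro mult_less_mono2) auto
  also have "\<dots> \<le> q ^ len_bound"
    using len_bound_ge(3) by (simp flip: power_add add: power_mono_q)
  finally show ?thesis .
qed

lemma power_values_fit:
  assumes "G \<le> q ^ (k * (n - k))" and "e < n"
  shows "q ^ e < q ^ len_bound" "q ^ e - 1 < q ^ len_bound" "q ^ e - 1 < q ^ n"
    "G * (q ^ e - 1) < q ^ len_bound"
  using power_minus_one_less[of e] less_power_len_bound power_strict_mono_q[OF assms(2)]
    coefficient_mult_less[OF assms(1), of e] assms(2) by simp_all

lemma init_qbinom_step_runs:
  assumes "s 10 = 1" and "s 11 = n - Suc k" and "s 12 = i" and "i < k"
    and "s 6 = qbinom q (n - Suc k + i) i"
  shows "\<exists>s'. runs_within q inp init_qbinom_step s s' (8 * Suc op_cost)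
    \<and> s' 12 = Suc i \<and> s' 6 = qbinom q (n - Suc k + Suc i) (Suc i)
    \<and> (\<forall>x. x \<notin> {6, 12, 13, 14, 15} \<longrightarrow> s' x = s x)"
proof -
  define G where "G = qbinom q (n - Suc k + i) i"
  define e where "e = n - Suc k + Suc i"
  have e: "e < n" "Suc i \<le> n" "n - Suc k + Suc i = e"
    using assms(4) k_less_n unfolding e_def by auto
  have G: "G \<le> q ^ (k * (n - k))"
    unfolding G_def using assms(4) k_less_n by (intro qbinom_le_power_k_n_k) auto
  have next_G: "qbinom q e (Suc i) = G * (q ^ e - 1) div (q ^ Suc i - 1)"
    unfolding G_def e_def using qbinom_Suc_Suc_eq_div[OF q_ge_2, of "n - Suc k + i" i] assms(4) k_less_n
    by (simp add: Suc_diff_Suc)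
  have "e < len_bound" "Suc i < len_bound"
    using e assms(4) k_less_n len_bound_ge(2) by linarith+
  then have fits: "G < q ^ len_bound" "G * (q ^ e - 1) < q ^ len_bound"
      "q ^ e < q ^ len_bound" "q ^ Suc i < q ^ len_bound"
      "q ^ e - 1 < q ^ n" "q ^ Suc i - 1 < q ^ n"
    using coefficient_less[OF G] coefficient_mult_less[OF G] power_minus_one_less e(1,2)
    by (simp_all add: power_strict_mono_q del: power_Suc)
  define s' where "s' = s(12 := Suc i, 13 := e, 14 := q ^ e, 14 := q ^ e - 1, 6 := G * (q ^ e - 1),
    15 := q ^ Suc i, 15 := q ^ Suc i - 1, 6 := qbinom q e (Suc i))"
  have "runs_within q inp init_qbinom_step s s' (8 * Suc op_cost)"
    unfolding init_qbinom_step_def s'_def next_G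
    apply (rule runs_within_mono)
     apply (rule runs_within_Seq_Assign[where K = op_cost],
        (rule acost_le; use assms fits e in \<open>simp add: small_less_power_len_bound G_def[symmetric]\<close>),
        use assms e in \<open>simp add: G_def[symmetric]\<close>)+
     apply (rule runs_within_Assign[where K = op_cost],
        rule acost_le; use assms fits e in \<open>simp add: small_less_power_len_bound G_def[symmetric]\<close>)
    using assms e by (simp_all add: G_def[symmetric])
  then show ?thesis
    unfolding s'_def e_def by auto
qed

lemma init_qbinom_runs:
  assumes "s 2 = k" and "s 10 = 1" and "s 11 = n - Suc k" and "i \<le> k" and "s 12 = i"
    and "s 6 = qbinom q (n - Suc k + i) i"
  shows "\<exists>s'. runs_within q inp init_qbinom s s' ((k - i) * (9 * op_cost + 8) + op_cost)
    \<and> s' 6 = qbinom q (n - 1) k \<and> (\<forall>x. x \<notin> {6, 12, 13, 14, 15} \<longrightarrow> s' x = s x)"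
  using assms
proof (induction "k - i" arbitrary: i s)
  case 0
  then have "i = k"
    by simp
  have "cmpcost q 12 2 s \<le> op_cost"
    using 0 \<open>i = k\<close> k_less_n by (intro cmpcost_le) simp_all
  with 0 have "runs_within q inp init_qbinom s s op_cost"
    unfolding init_qbinom_def by (intro runs_within_WhileF) auto
  with 0 \<open>i = k\<close> k_less_n show ?case
    by (auto simp: Suc_diff_Suc)
next
  case (Suc d)
  then have i: "i < k"
    by simp
  obtain s1 where step: "runs_within q inp init_qbinom_step s s1 (8 * Suc op_cost)"
      and s1: "s1 12 = Suc i" "s1 6 = qbinom q (n - Suc k + Suc i) (Suc i)"
        "\<forall>x. x \<notin> {6, 12, 13, 14, 15} \<longrightarrow> s1 x = s x"
    using init_qbinom_step_runs[of s i] Suc.prems i by blast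
  have "\<exists>s'. runs_within q inp init_qbinom s1 s' ((k - Suc i) * (9 * op_cost + 8) + op_cost)
      \<and> s' 6 = qbinom q (n - 1) k \<and> (\<forall>x. x \<notin> {6, 12, 13, 14, 15} \<longrightarrow> s' x = s1 x)"
    by (rule Suc.hyps(1)) (use Suc i s1 in simp_all)
  then obtain s' where rest: "runs_within q inp init_qbinom s1 s' ((k - Suc i) * (9 * op_cost + 8) + op_cost)"
      and "s' 6 = qbinom q (n - 1) k" and "\<forall>x. x \<notin> {6, 12, 13, 14, 15} \<longrightarrow> s' x = s1 x"
    by blast
  have "cmpcost q 12 2 s \<le> op_cost"
    using Suc.prems i k_less_n by (intro cmpcost_le) simp_all
  then have "runs_within q inp init_qbinom s s'
      (op_cost + 8 * Suc op_cost + ((k - Suc i) * (9 * op_cost + 8) + op_cost))"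
    using Suc.prems i step rest unfolding init_qbinom_def by (intro runs_within_WhileT) auto
  also have "op_cost + 8 * Suc op_cost + ((k - Suc i) * (9 * op_cost + 8) + op_cost)
      = (k - i) * (9 * op_cost + 8) + op_cost"
    using i by (simp add: Suc_diff_Suc[symmetric] algebra_simps)
  finally show ?case
    using \<open>s' 6 = qbinom q (n - 1) k\<close> \<open>\<forall>x. x \<notin> {6, 12, 13, 14, 15} \<longrightarrow> s' x = s1 x\<close> s1(3)
    by auto
qed

definition lead_bit :: "nat \<Rightarrow> nat" where
  "lead_bit j = inp 0 (n + 1 - j)"

definition lead_count :: "nat \<Rightarrow> nat" where
  "lead_count j = (\<Sum>l=1..j. lead_bit l)"

definition column :: "nat \<Rightarrow> nat" where
  "column j = col_prefix (n + 1 - j) k"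

definition index_term :: "nat \<Rightarrow> nat" where
  "index_term j = (lead_bit j * q ^ (k - lead_count (j - 1))
     + (1 - lead_bit j) * (column j div q ^ lead_count (j - 1)))
     * qbinom q (n - j) (k - lead_count (j - 1))"

lemma lead_bit_le: "lead_bit j \<le> 1"
  unfolding lead_bit_def by (rule bit_row)

lemma lead_count_0 [simp]: "lead_count 0 = 0"
  by (simp add: lead_count_def)

lemma lead_count_Suc: "lead_count (Suc j) = lead_count j + lead_bit (Suc j)"
  by (simp add: lead_count_def)

lemma lead_count_add_le: "lead_count (a + b) \<le> lead_count a + b"
  by (induction b) (auto simp: lead_count_Suc intro: add_mono[OF _ lead_bit_le, simplified])

lemma lead_count_le: "lead_count j \<le> j"
  using lead_count_add_le[of 0 j] by simp

lemma column_less: "column j < q ^ k"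
  unfolding column_def by (rule col_prefix_less)

lemma qbinom_index_le:
  assumes "1 \<le> j" and "j \<le> n"
  shows "qbinom q (n - j) (k - lead_count (j - 1)) \<le> q ^ (k * (n - k))"
  using lead_count_le[of "j - 1"] assms k_less_n by (intro qbinom_le_power_k_n_k) auto

lemma index_term_le:
  assumes "1 \<le> j" and "j \<le> n"
  shows "index_term j \<le> q ^ (k + k * (n - k))"
proof -
  have "column j div q ^ lead_count (j - 1) \<le> q ^ k"
    using column_less[of j] div_le_dividend[of "column j" "q ^ lead_count (j - 1)"] by linarith
  then have "lead_bit j * q ^ (k - lead_count (j - 1))
      + (1 - lead_bit j) * (column j div q ^ lead_count (j - 1)) \<le> q ^ k"
    using lead_bit_le[of j] by (cases "lead_bit j") (auto intro: power_mono_q)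
  then show ?thesis
    unfolding index_term_def power_add using qbinom_index_le[OF assms] by (rule mult_le_mono)
qed

lemma partial_index_less: "j \<le> n \<Longrightarrow> (\<Sum>i=1..j. index_term i) < q ^ len_bound"
proof -
  assume j: "j \<le> n"
  have "(\<Sum>i=1..j. index_term i) \<le> n * q ^ (k + k * (n - k))"
    using j index_term_le sum_bounded_above[of "{1..j}" index_term "q ^ (k + k * (n - k))"]
    by (simp add: order_trans)
  also have "\<dots> < q ^ n * q ^ (k + k * (n - k))"
    using less_power_n[of n] q_ge_2 by simp
  also have "\<dots> \<le> q ^ len_bound"
    using len_bound_ge(4) by (simp flip: power_add add: power_mono_q ac_simps)
  finally show ?thesis .
qed

lemma partial_index_Suc: "1 \<le> j \<Longrightarrow> (\<Sum>i=1..j-1. index_term i) + index_term j = (\<Sum>i=1..j. index_term i)"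
  by (cases j) auto

text \<open>The registers at the start of round j. The condition k - w_(j-1) \<le> n - j says that the
  coefficient [n - j, k - w_(j-1)]_q is still nonzero; once it fails, all remaining terms vanish.\<close>

definition at_column :: "(nat \<Rightarrow> nat) \<Rightarrow> nat \<Rightarrow> bool" where
  "at_column s j \<longleftrightarrow> 1 \<le> j \<and> j \<le> n \<and> k - lead_count (j - 1) \<le> n - j \<and>
     s 1 = n \<and> s 2 = k \<and> s 3 = n + 1 - j \<and> s 4 = n - j \<and> s 5 = k - lead_count (j - 1) \<and>
     s 6 = qbinom q (n - j) (k - lead_count (j - 1)) \<and> s 7 = lead_count (j - 1) \<and> s 9 = 0 \<and> s 10 = 1"

definition loop_inv :: "(nat \<Rightarrow> nat) \<Rightarrow> nat \<Rightarrow> bool" where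
  "loop_inv s j \<longleftrightarrow> at_column s j \<and> s 8 = 1 \<and> s 0 = (\<Sum>i=1..j-1. index_term i)"

lemma at_columnD:
  assumes "at_column s j"
  shows "1 \<le> j" "j \<le> n" "k - lead_count (j - 1) \<le> n - j" "s 1 = n" "s 2 = k" "s 3 = n + 1 - j"
    "s 4 = n - j" "s 5 = k - lead_count (j - 1)" "s 6 = qbinom q (n - j) (k - lead_count (j - 1))"
    "s 7 = lead_count (j - 1)" "s 9 = 0" "s 10 = 1"
  using assms unfolding at_column_def by simp_all

lemma at_column_frame:
  "at_column s j \<Longrightarrow> (\<forall>x\<in>{1, 2, 3, 4, 5, 6, 7, 9, 10}. s' x = s x) \<Longrightarrow> at_column s' j"
  unfolding at_column_def by simp

lemma add_term_runs_lead:
  assumes st: "at_column s j" and "s 18 = 1" and "lead_bit j = 1"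
    and s0: "s 0 = (\<Sum>i=1..j-1. index_term i)"
  shows "\<exists>s'. runs_within q inp add_term s s' (op_cost + 2 * Suc op_cost)
    \<and> s' 0 = (\<Sum>i=1..j. index_term i) \<and> (\<forall>x. x \<notin> {0, 19} \<longrightarrow> s' x = s x)"
proof -
  define r where "r = k - lead_count (j - 1)"
  define G where "G = qbinom q (n - j) r"
  have R: "s 5 = r" "s 6 = G" "s 9 = 0" "1 \<le> j" "j \<le> n" "r \<le> n"
    using at_columnD[OF st] unfolding r_def G_def by (simp_all, linarith)
  have sum: "(\<Sum>i=1..j. index_term i) = s 0 + G * q ^ r"
    using partial_index_Suc[OF R(4)] assms(3)
    by (simp add: s0 index_term_def r_def G_def mult.commute)
  have fits: "s 0 + G * q ^ r < q ^ len_bound" "s 0 < q ^ len_bound" "G * q ^ r < q ^ len_bound"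
      "G < q ^ len_bound"
    using partial_index_less[OF R(5)] coefficient_less qbinom_index_le[OF R(4,5)]
    unfolding sum G_def r_def by auto
  define s' where "s' = s(19 := G * q ^ r, 0 := s 0 + G * q ^ r)"
  have "runs_within q inp add_term s s' (op_cost + 2 * Suc op_cost)"
    unfolding add_term_def add_lead_term_def s'_def
    apply (rule runs_within_IfT_small, simp add: R assms(2), use R assms(2) in simp)
    apply (rule runs_within_mono)
     apply (rule runs_within_Seq_Assign[where K = op_cost], (rule acost_le; use R fits in simp), simp)
     apply (rule runs_within_Assign[where K = op_cost], rule acost_le; use R fits in simp)
    by (simp_all add: R)
  then show ?thesis
    using sum by (auto simp: s'_def)
qed

definition read_cost :: nat where
  "read_cost = k * (9 * n + 13) + (n + 1)"

lemma add_term_runs_column: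
  assumes st: "at_column s j" and "s 18 = 0" and "lead_bit j = 0"
    and s0: "s 0 = (\<Sum>i=1..j-1. index_term i)"
  shows "\<exists>s'. runs_within q inp add_term s s' (op_cost + 5 * Suc op_cost + read_cost)
    \<and> s' 0 = (\<Sum>i=1..j. index_term i) \<and> (\<forall>x. x \<notin> {0, 19, 20, 21} \<longrightarrow> s' x = s x)"
proof -
  define w where "w = lead_count (j - 1)"
  define G where "G = qbinom q (n - j) (k - w)"
  define c where "c = column j div q ^ w"
  have R: "s 2 = k" "s 3 = n + 1 - j" "s 6 = G" "s 7 = w" "s 9 = 0" "s 10 = 1" "1 \<le> j" "j \<le> n"
    using at_columnD[OF st] unfolding w_def G_def by simp_all
  have sum: "(\<Sum>i=1..j. index_term i) = s 0 + c * G"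
    using partial_index_Suc[OF R(7)] assms(3) by (simp add: s0 index_term_def w_def G_def c_def)
  have "c < q ^ n"
    using column_less[of j] div_le_dividend[of "column j" "q ^ w"] power_mono_q[of k n] k_less_n
    unfolding c_def by linarith
  moreover have "column j < q ^ n"
    using column_less[of j] power_mono_q[of k n] k_less_n by linarith
  ultimately have fits: "s 0 + c * G < q ^ len_bound" "s 0 < q ^ len_bound" "c * G < q ^ len_bound"
      "G < q ^ len_bound" "c < q ^ len_bound" "column j < q ^ len_bound" "c < q ^ n"
    using partial_index_less[OF R(8)] coefficient_less qbinom_index_le[OF R(7,8)] less_power_len_bound
    unfolding sum G_def w_def by auto
  have "w \<le> n"
    using lead_count_le[of "j - 1"] R(8) unfolding w_def by linarith
  define s1 where "s1 = s(19 := 0, 20 := 0)"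
  have "\<exists>s2. runs_within q inp read_column s1 s2 ((k - 0) * (9 * n + 13) + (n + 1))
      \<and> s2 19 = col_prefix (n + 1 - j) k \<and> (\<forall>x. x \<notin> {19, 20, 21} \<longrightarrow> s2 x = s1 x)"
    by (rule read_column_runs) (use R in \<open>simp_all add: s1_def\<close>)
  then obtain s2 where read: "runs_within q inp read_column s1 s2 ((k - 0) * (9 * n + 13) + (n + 1))"
      and "s2 19 = column j" and s2: "\<forall>x. x \<notin> {19, 20, 21} \<longrightarrow> s2 x = s1 x"
    unfolding column_def by blast
  define s' where "s' = s2(19 := c, 19 := c * G, 0 := s 0 + c * G)"
  have "runs_within q inp add_term s s' (op_cost + 5 * Suc op_cost + read_cost)"
    unfolding add_term_def add_column_term_def s'_def
    apply (rule runs_within_mono)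
     apply (rule runs_within_IfF_small, simp add: R assms(2), use R in simp)
     apply (rule runs_within_Seq_Assign[where K = op_cost], (rule acost_le, simp), simp)+
     apply (rule runs_within_Seq[OF read[unfolded s1_def]])
     apply (rule runs_within_Seq_Assign[where K = op_cost], (rule acost_Times_le_left acost_le;
        use R s2 \<open>s2 19 = column j\<close> fits \<open>w \<le> n\<close> in \<open>simp add: s1_def c_def[symmetric]\<close>),
        use R s2 \<open>s2 19 = column j\<close> in \<open>simp add: s1_def c_def[symmetric]\<close>)+
     apply (rule runs_within_Assign[where K = op_cost], rule acost_le;
        use R s2 \<open>s2 19 = column j\<close> fits \<open>w \<le> n\<close> in \<open>simp add: s1_def c_def[symmetric]\<close>)
    using R s2 by (simp_all add: s1_def read_cost_def)
  moreover have "s' 0 = (\<Sum>i=1..j. index_term i)"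
    using sum by (simp add: s'_def)
  moreover have "\<forall>x. x \<notin> {0, 19, 20, 21} \<longrightarrow> s' x = s x"
    using s2 by (simp add: s'_def s1_def)
  ultimately show ?thesis
    by blast
qed

lemma add_term_runs:
  assumes "at_column s j" and "s 18 = lead_bit j" and "s 0 = (\<Sum>i=1..j-1. index_term i)"
  shows "\<exists>s'. runs_within q inp add_term s s' (op_cost + 5 * Suc op_cost + (1 - lead_bit j) * read_cost)
    \<and> s' 0 = (\<Sum>i=1..j. index_term i) \<and> (\<forall>x. x \<notin> {0, 19, 20, 21} \<longrightarrow> s' x = s x)"
proof (cases "lead_bit j = 1")
  case True
  then obtain s' where "runs_within q inp add_term s s' (op_cost + 2 * Suc op_cost)"
      and "s' 0 = (\<Sum>i=1..j. index_term i)" and "\<forall>x. x \<notin> {0, 19} \<longrightarrow> s' x = s x"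
    using add_term_runs_lead[OF assms(1) _ True assms(3)] assms(2) by auto
  moreover have "op_cost + 2 * Suc op_cost \<le> op_cost + 5 * Suc op_cost + (1 - lead_bit j) * read_cost"
    by simp
  ultimately show ?thesis
    by (blast intro: runs_within_mono)
next
  case False
  then have "lead_bit j = 0"
    using lead_bit_le[of j] by simp
  then show ?thesis
    using add_term_runs_column[OF assms(1) _ _ assms(3)] assms(2) by simp
qed

lemma advance_runs:
  assumes "s 3 = p" and "s 4 = m" and "s 10 = 1" and "p \<le> n" and "m \<le> n"
  shows "runs_within q inp advance s (s(4 := m - 1, 3 := p - 1)) (2 * Suc op_cost)"
  unfolding advance_def
  apply (rule runs_within_mono)
   apply (rule runs_within_Seq_Assign[where K = op_cost],
      (rule acost_le; use assms in \<open>simp add: small_less_power_len_bound\<close>), use assms in simp)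
   apply (rule runs_within_Assign[where K = op_cost],
      (rule acost_le; use assms in \<open>simp add: small_less_power_len_bound\<close>))
  using assms by simp_all

lemma drop_row_runs:
  assumes "s 4 = m" and "s 5 = r" and "s 6 = qbinom q m r" and "s 9 = 0" and "s 10 = 1"
    and "m < n" and "r \<le> m" and "qbinom q m r \<le> q ^ (k * (n - k))"
  shows "\<exists>s'. runs_within q inp (If 9 5 drop_row Skip) s s' (op_cost + 7 * Suc op_cost)
    \<and> s' 5 = r - 1 \<and> s' 6 = qbinom q (m - 1) (r - 1) \<and> (\<forall>x. x \<notin> {5, 6, 22, 23} \<longrightarrow> s' x = s x)"
proof (cases "r = 0")
  case True
  then have "runs_within q inp (If 9 5 drop_row Skip) s s (op_cost + 1)"
    using assms by (intro runs_within_IfF_small runs_within_Skip) auto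
  then have "runs_within q inp (If 9 5 drop_row Skip) s s (op_cost + 7 * Suc op_cost)"
    by (rule runs_within_mono) simp
  with True assms(2,3) show ?thesis
    by auto
next
  case False
  then obtain m' r' where m': "m = Suc m'" and r': "r = Suc r'"
    using assms(7) by (cases m; cases r) auto
  define G where "G = qbinom q m r"
  note fits = power_values_fit[OF assms(8)[folded G_def], of m] power_values_fit[OF assms(8)[folded G_def], of r]
    coefficient_less[OF assms(8)[folded G_def]]
  have "runs_within q inp (If 9 5 drop_row Skip) s
      (s(22 := q ^ r, 22 := q ^ r - 1, 6 := G * (q ^ r - 1), 23 := q ^ m, 23 := q ^ m - 1,
        6 := G * (q ^ r - 1) div (q ^ m - 1), 5 := r - 1)) (op_cost + 7 * Suc op_cost)"
    unfolding drop_row_def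
    apply (rule runs_within_IfT_small, use assms False in simp, use assms in simp)
    apply (rule runs_within_mono)
     apply (rule runs_within_Seq_Assign[where K = op_cost],
        (rule acost_le; use assms fits in \<open>simp add: G_def[symmetric] small_less_power_len_bound\<close>),
        use assms in \<open>simp add: G_def[symmetric]\<close>)+
     apply (rule runs_within_Assign[where K = op_cost],
        (rule acost_le; use assms fits in \<open>simp add: G_def[symmetric] small_less_power_len_bound\<close>))
    using assms by (simp_all add: G_def[symmetric])
  moreover have "G * (q ^ r - 1) div (q ^ m - 1) = qbinom q (m - 1) (r - 1)"
    unfolding G_def m' r' using qbinom_eq_div_Suc_Suc[OF q_ge_2, of m' r'] by simp
  ultimately show ?thesis
    by (intro exI[of _ "s(22 := q ^ r, 22 := q ^ r - 1, 6 := G * (q ^ r - 1), 23 := q ^ m,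
      23 := q ^ m - 1, 6 := G * (q ^ r - 1) div (q ^ m - 1), 5 := r - 1)"]) auto
qed

lemma drop_column_runs:
  assumes "s 3 = p" and "s 4 = m" and "s 5 = r" and "s 6 = qbinom q m r" and "s 10 = 1"
    and "p \<le> n" and "r < m" and "m < n" and "qbinom q m r \<le> q ^ (k * (n - k))"
  shows "\<exists>s'. runs_within q inp drop_column s s' (9 * Suc op_cost)
    \<and> s' 3 = p - 1 \<and> s' 4 = m - 1 \<and> s' 6 = qbinom q (m - 1) r
    \<and> (\<forall>x. x \<notin> {3, 4, 6, 22, 23} \<longrightarrow> s' x = s x)"
proof -
  obtain m' where m': "m = Suc m'"
    using assms(7) by (cases m) auto
  define G where "G = qbinom q m r"
  have "m - r < n" "m - r \<le> n" "m \<le> n" "r \<le> n"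
    using assms(7,8) by auto
  note fits = power_values_fit[OF assms(9)[folded G_def] assms(8), simplified]
    power_values_fit[OF assms(9)[folded G_def] \<open>m - r < n\<close>, simplified]
    coefficient_less[OF assms(9)[folded G_def]] \<open>m \<le> n\<close> \<open>m - r \<le> n\<close> \<open>r \<le> n\<close>
  define s' where "s' = s(22 := m - r, 22 := q ^ (m - r), 22 := q ^ (m - r) - 1, 6 := G * (q ^ (m - r) - 1),
    23 := q ^ m, 23 := q ^ m - 1, 6 := G * (q ^ (m - r) - 1) div (q ^ m - 1), 4 := m - 1, 3 := p - 1)"
  have "runs_within q inp drop_column s s' (9 * Suc op_cost)"
    unfolding drop_column_def s'_def
    apply (rule runs_within_mono)
     apply (rule runs_within_Seq_Assign[where K = op_cost],
        (rule acost_le; simp add: assms fits G_def[symmetric] small_less_power_len_bound),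
        simp add: assms G_def[symmetric])+
     apply (rule runs_within_eq_state, rule advance_runs[where p = p and m = m])
    by (simp_all add: assms fits G_def[symmetric])
  moreover have "G * (q ^ (m - r) - 1) div (q ^ m - 1) = qbinom q (m - 1) r"
    unfolding G_def m' using qbinom_eq_div_Suc[OF q_ge_2, of m' r] by simp
  ultimately show ?thesis
    unfolding s'_def by (intro exI[of _ s']) (auto simp: s'_def)
qed

definition update_cost :: nat where
  "update_cost = 4 * op_cost + 10 * Suc op_cost"

lemma update_runs_lead:
  assumes st: "at_column s j" and "s 18 = 1" and "lead_bit j = 1" and "j < n"
  shows "\<exists>s'. runs_within q inp update s s' update_cost \<and> at_column s' (Suc j) \<and> s' 0 = s 0 \<and> s' 8 = s 8"
proof -
  define w where "w = lead_count (j - 1)"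
  define m where "m = n - j"
  define r where "r = k - w"
  note R = at_columnD[OF st, folded w_def, folded m_def, folded r_def]
  have w: "lead_count j = Suc w" "Suc w \<le> n" "w \<le> n"
    using lead_count_Suc[of "j - 1"] lead_count_le[of "j - 1"] R(1) assms(3,4) unfolding w_def by simp_all
  have m: "0 < m" "m < n" "m - 1 \<le> n" "n + 1 - j \<le> n" "r \<le> m"
    using assms(4) R(1,3) unfolding m_def by auto
  obtain s1 where drop: "runs_within q inp (If 9 5 drop_row Skip) s s1 (op_cost + 7 * Suc op_cost)"
      and s1: "s1 5 = r - 1" "s1 6 = qbinom q (m - 1) (r - 1)" "\<forall>x. x \<notin> {5, 6, 22, 23} \<longrightarrow> s1 x = s x"
    using drop_row_runs[OF R(7,8,9,11,12) m(2,5)] qbinom_index_le[OF R(1,2)]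
    unfolding m_def r_def w_def by blast
  define s' where "s' = s1(7 := Suc w, 4 := m - 1, 3 := n - j)"
  have "runs_within q inp (Seq (Assign 7 (Plus 7 10)) advance) s1 s' (Suc op_cost + 2 * Suc op_cost)"
    unfolding s'_def
    apply (rule runs_within_Seq_Assign[where K = op_cost],
        (rule acost_le; simp add: R s1 w m small_less_power_len_bound), simp add: R s1)
    apply (rule runs_within_eq_state, rule advance_runs[where p = "n + 1 - j" and m = m])
    using m R(1) by (simp_all add: R s1)
  with drop have "runs_within q inp update s s' (op_cost + (op_cost + ((op_cost + 7 * Suc op_cost)
      + (Suc op_cost + 2 * Suc op_cost))))"
    unfolding update_def update_lead_def using R m assms(2)
    by (intro runs_within_IfT_small runs_within_Seq[OF drop]) simp_all
  then have "runs_within q inp update s s' update_cost"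
    by (rule runs_within_mono) (simp add: update_cost_def)
  moreover have "k - Suc w \<le> n - Suc j"
    using m(5) unfolding m_def r_def by linarith
  then have "at_column s' (Suc j)"
    unfolding at_column_def s'_def using s1 R w assms(4) unfolding m_def r_def by simp
  ultimately show ?thesis
    using s1(3) by (auto simp: s'_def)
qed

lemma update_runs_nonlead:
  assumes st: "at_column s j" and "s 18 = 0" and "lead_bit j = 0" and "j < n"
    and "k - lead_count (j - 1) < n - j"
  shows "\<exists>s'. runs_within q inp update s s' update_cost \<and> at_column s' (Suc j) \<and> s' 0 = s 0 \<and> s' 8 = s 8"
proof -
  define w where "w = lead_count (j - 1)"
  define m where "m = n - j"
  define r where "r = k - w"
  note R = at_columnD[OF st, folded w_def, folded m_def, folded r_def]
  have w: "lead_count j = w"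
    using lead_count_Suc[of "j - 1"] R(1) assms(3) unfolding w_def by simp
  have m: "0 < m" "m < n" "r < m" "n + 1 - j \<le> n"
    using assms(4,5) R(1) unfolding m_def r_def w_def by auto
  obtain s' where drop: "runs_within q inp drop_column s s' (9 * Suc op_cost)"
      and s': "s' 3 = n + 1 - j - 1" "s' 4 = m - 1" "s' 6 = qbinom q (m - 1) r"
        "\<forall>x. x \<notin> {3, 4, 6, 22, 23} \<longrightarrow> s' x = s x"
    using drop_column_runs[OF R(6,7,8,9,12) m(4,3,2)] qbinom_index_le[OF R(1,2)]
    unfolding m_def r_def w_def by blast
  have "runs_within q inp update s s' (op_cost + (op_cost + (op_cost + 9 * Suc op_cost)))"
    unfolding update_def update_nonlead_def using drop R m assms(2)
    by (intro runs_within_IfT_small runs_within_IfF_small) simp_all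
  then have "runs_within q inp update s s' update_cost"
    by (rule runs_within_mono) (simp add: update_cost_def)
  moreover have "k - w \<le> n - Suc j"
    using m(3) unfolding m_def r_def by linarith
  then have "at_column s' (Suc j)"
    unfolding at_column_def using s' R w assms(4) unfolding m_def r_def by simp
  ultimately show ?thesis
    using s'(4) by auto
qed

lemma update_runs_stop:
  assumes st: "at_column s j" and "s 18 = lead_bit j"
    and "j = n \<or> lead_bit j = 0 \<and> k - lead_count (j - 1) = n - j"
  shows "runs_within q inp update s (s(8 := 0)) update_cost"
proof -
  note R = at_columnD[OF st]
  have stop: "runs_within q inp (Assign 8 (Cnst 0)) s (s(8 := 0)) (Suc op_cost)"
    by (rule runs_within_Assign[OF acost_Cnst_le]) simp_all
  consider (last) "j = n" | (full) "j < n" "lead_bit j = 0" "k - lead_count (j - 1) = n - j"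
    using assms(3) R(2) by linarith
  then have "runs_within q inp update s (s(8 := 0)) (op_cost + (op_cost + (op_cost + Suc op_cost)))"
  proof cases
    case last
    then have "runs_within q inp update s (s(8 := 0)) (op_cost + Suc op_cost)"
      unfolding update_def using R stop by (intro runs_within_IfF_small) simp_all
    then show ?thesis
      by (rule runs_within_mono) simp
  next
    case full
    then show ?thesis
      unfolding update_def update_nonlead_def using R assms(2) stop
      by (intro runs_within_IfT_small runs_within_IfF_small) simp_all
  qed
  then show ?thesis
    unfolding update_cost_def by (rule runs_within_mono) simp
qed

definition more_columns :: "nat \<Rightarrow> bool" where
  "more_columns j \<longleftrightarrow> j < n \<and> (lead_bit j = 1 \<or> k - lead_count (j - 1) < n - j)"

definition step_cost :: nat where
  "step_cost = Suc op_cost + (op_cost + 5 * Suc op_cost) + update_cost"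

lemma index_step_runs:
  assumes "loop_inv s j"
  shows "\<exists>s'. runs_within q inp index_step s s' (step_cost + (1 - lead_bit j) * read_cost)
    \<and> s' 0 = (\<Sum>i=1..j. index_term i)
    \<and> (if more_columns j then at_column s' (Suc j) \<and> s' 8 = 1 else s' 8 = 0 \<and> s' 9 = 0)"
proof -
  have st: "at_column s j" and "s 8 = 1" and s0: "s 0 = (\<Sum>i=1..j-1. index_term i)"
    using assms unfolding loop_inv_def by auto
  note R = at_columnD[OF st]
  have "n + 1 - j \<le> n"
    using R(1) by simp
  have read: "runs_within q inp (Assign 18 (Inp 9 3)) s (s(18 := lead_bit j)) (Suc op_cost)"
    using R \<open>n + 1 - j \<le> n\<close> by (intro runs_within_Assign[OF acost_Inp_le]) (simp_all add: lead_bit_def)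
  have "at_column (s(18 := lead_bit j)) j"
    using st by (rule at_column_frame) simp
  then have "\<exists>s2. runs_within q inp add_term (s(18 := lead_bit j)) s2
        (op_cost + 5 * Suc op_cost + (1 - lead_bit j) * read_cost) \<and> s2 0 = (\<Sum>i=1..j. index_term i)
      \<and> (\<forall>x. x \<notin> {0, 19, 20, 21} \<longrightarrow> s2 x = (s(18 := lead_bit j)) x)"
    using s0 by (intro add_term_runs) simp_all
  then obtain s2 where add: "runs_within q inp add_term (s(18 := lead_bit j)) s2
        (op_cost + 5 * Suc op_cost + (1 - lead_bit j) * read_cost)"
      and s2: "s2 0 = (\<Sum>i=1..j. index_term i)"
        "\<forall>x. x \<notin> {0, 19, 20, 21} \<longrightarrow> s2 x = (s(18 := lead_bit j)) x"
    by blast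
  have st2: "at_column s2 j"
    using \<open>at_column (s(18 := lead_bit j)) j\<close> by (rule at_column_frame) (simp add: s2(2))
  have s2': "s2 18 = lead_bit j" "s2 8 = 1" "s2 9 = 0"
    using s2(2) R \<open>s 8 = 1\<close> by simp_all
  obtain s3 where upd: "runs_within q inp update s2 s3 update_cost" and s3: "s3 0 = s2 0"
      and s3_next: "if more_columns j then at_column s3 (Suc j) \<and> s3 8 = 1 else s3 8 = 0 \<and> s3 9 = 0"
  proof (cases "more_columns j")
    case True
    then consider "lead_bit j = 1" "j < n" | "lead_bit j = 0" "j < n" "k - lead_count (j - 1) < n - j"
      using lead_bit_le[of j] unfolding more_columns_def by linarith
    then show ?thesis
      using that update_runs_lead[OF st2] update_runs_nonlead[OF st2] s2' True by cases auto
  next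
    case False
    then have "j = n \<or> lead_bit j = 0 \<and> k - lead_count (j - 1) = n - j"
      using R(1-3) lead_bit_le[of j] unfolding more_columns_def by auto
    then show ?thesis
      using that update_runs_stop[OF st2 s2'(1)] s2' False by auto
  qed
  have "runs_within q inp index_step s s3
      (Suc op_cost + ((op_cost + 5 * Suc op_cost + (1 - lead_bit j) * read_cost) + update_cost))"
    unfolding index_step_def using read add upd by (intro runs_within_Seq)
  then have "runs_within q inp index_step s s3 (step_cost + (1 - lead_bit j) * read_cost)"
    by (rule runs_within_mono) (simp add: step_cost_def)
  then show ?thesis
    using s3 s2(1) s3_next by auto
qed

lemma nonlead_count_less: "at_column s j \<Longrightarrow> j - 1 - lead_count (j - 1) < n - k"
  using at_columnD(1-3)[of s j] lead_count_le[of "j - 1"] k_less_n by linarith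

lemma index_term_eq_0_beyond:
  assumes "1 \<le> j" and "lead_bit j = 0" and "k - lead_count (j - 1) = n - j" and "j < i" and "i \<le> n"
  shows "index_term i = 0"
proof -
  have "lead_count j = lead_count (j - 1)"
    using assms(1,2) lead_count_Suc[of "j - 1"] by simp
  moreover have "lead_count (i - 1) \<le> lead_count j + (i - 1 - j)"
    using lead_count_add_le[of j "i - 1 - j"] assms(4) by simp
  ultimately have "n - i < k - lead_count (i - 1)"
    using assms by linarith
  then show ?thesis
    unfolding index_term_def by (simp add: qbinom_eq_0)
qed

lemma partial_index_complete:
  assumes "at_column s j" and "\<not> more_columns j"
  shows "(\<Sum>i=1..j. index_term i) = (\<Sum>i=1..n. index_term i)"
proof (cases "j = n")
  case False
  then have "j < n" "lead_bit j = 0" "k - lead_count (j - 1) = n - j"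
    using assms at_columnD(1-3)[OF assms(1)] lead_bit_le[of j] unfolding more_columns_def by auto
  then show ?thesis
    using index_term_eq_0_beyond at_columnD(1)[OF assms(1)]
    by (intro sum.mono_neutral_right[symmetric]) auto
qed simp

text \<open>Only columns without a leading one are read, and fewer than n - k of them are read
  before the loop stops; j - 1 - lead_count (j - 1) of them precede column j.\<close>

definition loop_cost :: "nat \<Rightarrow> nat" where
  "loop_cost j = (n + 1 - j) * (step_cost + 2) + (n - k - (j - 1 - lead_count (j - 1))) * read_cost + 2"

lemma cmpcost_flag: "s 9 = 0 \<Longrightarrow> s 8 \<le> 1 \<Longrightarrow> cmpcost q 9 8 s \<le> 2"
  unfolding cmpcost_def by (auto simp: le_Suc_eq)

lemma loop_cost_Suc:
  assumes "at_column s (Suc j)" and "1 \<le> j" and "j < n"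
  shows "loop_cost j = 2 + (step_cost + (1 - lead_bit j) * read_cost) + loop_cost (Suc j)"
proof -
  define N where "N = n + 1 - Suc j"
  define A where "A = n - k - (j - lead_count j)"
  define B where "B = 1 - lead_bit j"
  have "lead_count j = lead_count (j - 1) + lead_bit j"
    using lead_count_Suc[of "j - 1"] assms(2) by simp
  moreover have "j - lead_count j < n - k"
    using nonlead_count_less[OF assms(1)] by simp
  ultimately have "n - k - (j - 1 - lead_count (j - 1)) = A + B"
    unfolding A_def B_def using lead_count_le[of "j - 1"] lead_bit_le[of j] assms(2)
    by (cases "lead_bit j"; simp; linarith)
  moreover have "n + 1 - j = Suc N"
    using assms(3) unfolding N_def by (simp add: Suc_diff_le)
  ultimately have "loop_cost j = Suc N * (step_cost + 2) + (A + B) * read_cost + 2"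
    unfolding loop_cost_def by (simp only:)
  moreover have "loop_cost (Suc j) = N * (step_cost + 2) + A * read_cost + 2"
    unfolding loop_cost_def N_def A_def by simp
  ultimately show ?thesis
    unfolding B_def[symmetric] by (simp add: algebra_simps)
qed

lemma loop_cost_last:
  assumes "at_column s j"
  shows "2 + (step_cost + (1 - lead_bit j) * read_cost) + 2 \<le> loop_cost j"
proof -
  have "1 - lead_bit j \<le> n - k - (j - 1 - lead_count (j - 1))"
    using nonlead_count_less[OF assms] by simp
  then have "(1 - lead_bit j) * read_cost \<le> (n - k - (j - 1 - lead_count (j - 1))) * read_cost"
    by (rule mult_le_mono1)
  moreover have "step_cost + 2 \<le> (n + 1 - j) * (step_cost + 2)"
    using mult_le_mono1[of 1 "n + 1 - j" "step_cost + 2"] at_columnD(2)[OF assms] by simp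
  ultimately show ?thesis
    unfolding loop_cost_def by linarith
qed

lemma index_loop_runs:
  "loop_inv s j \<Longrightarrow> \<exists>s'. runs_within q inp index_loop s s' (loop_cost j) \<and> s' 0 = (\<Sum>i=1..n. index_term i)"
proof (induction "n - j" arbitrary: s j rule: less_induct)
  case less
  have st: "at_column s j" and "s 8 = 1"
    using less.prems unfolding loop_inv_def by auto
  note R = at_columnD[OF st]
  obtain s' where step: "runs_within q inp index_step s s' (step_cost + (1 - lead_bit j) * read_cost)"
      and s': "s' 0 = (\<Sum>i=1..j. index_term i)"
      and s'_next: "if more_columns j then at_column s' (Suc j) \<and> s' 8 = 1 else s' 8 = 0 \<and> s' 9 = 0"
    using index_step_runs[OF less.prems] by blast
  have cmp: "cmpcost q 9 8 s \<le> 2"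
    using R \<open>s 8 = 1\<close> by (simp add: cmpcost_flag)
  show ?case
  proof (cases "more_columns j")
    case True
    then have "loop_inv s' (Suc j)" and "n - Suc j < n - j"
      using s' s'_next unfolding loop_inv_def more_columns_def by auto
    then obtain s'' where rest: "runs_within q inp index_loop s' s'' (loop_cost (Suc j))"
        and "s'' 0 = (\<Sum>i=1..n. index_term i)"
      using less.hyps by blast
    have "runs_within q inp index_loop s s'' (2 + (step_cost + (1 - lead_bit j) * read_cost) + loop_cost (Suc j))"
      unfolding index_loop_def using R \<open>s 8 = 1\<close> cmp step rest
      by (intro runs_within_WhileT[where K = 2]) (simp_all add: index_loop_def)
    moreover have "2 + (step_cost + (1 - lead_bit j) * read_cost) + loop_cost (Suc j) = loop_cost j"
      using loop_cost_Suc[of s' j] R(1) True s'_next unfolding more_columns_def by simp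
    ultimately show ?thesis
      using \<open>s'' 0 = _\<close> by auto
  next
    case False
    then have "s' 8 = 0" "s' 9 = 0"
      using s'_next by auto
    then have "runs_within q inp index_loop s' s' 2"
      unfolding index_loop_def by (intro runs_within_WhileF) (simp_all add: cmpcost_flag)
    then have "runs_within q inp index_loop s s' (2 + (step_cost + (1 - lead_bit j) * read_cost) + 2)"
      using R \<open>s 8 = 1\<close> cmp step unfolding index_loop_def by (intro runs_within_WhileT) simp_all
    moreover have "2 + (step_cost + (1 - lead_bit j) * read_cost) + 2 \<le> loop_cost j"
      by (rule loop_cost_last[OF st])
    ultimately show ?thesis
      using s' partial_index_complete[OF st False] by (auto intro: runs_within_mono)
  qed
qed

definition main_cost :: nat where
  "main_cost = 5 * Suc op_cost + (k * (9 * op_cost + 8) + op_cost) + 5 * Suc op_cost + loop_cost 1"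

lemma prepare_runs:
  "\<exists>s'. runs_within q inp prepare (init n k) s' (5 * Suc op_cost + (k * (9 * op_cost + 8) + op_cost))
    \<and> s' 6 = qbinom q (n - 1) k \<and> s' 10 = 1 \<and> (\<forall>x\<in>{0, 1, 2, 9}. s' x = init n k x)"
proof -
  define s1 where "s1 = (init n k)(10 := 1, 6 := 1, 11 := n - k, 11 := n - Suc k, 12 := 0)"
  have "\<exists>s'. runs_within q inp init_qbinom s1 s' ((k - 0) * (9 * op_cost + 8) + op_cost)
      \<and> s' 6 = qbinom q (n - 1) k \<and> (\<forall>x. x \<notin> {6, 12, 13, 14, 15} \<longrightarrow> s' x = s1 x)"
    by (rule init_qbinom_runs) (simp_all add: s1_def init_def)
  then obtain s' where loop: "runs_within q inp init_qbinom s1 s' ((k - 0) * (9 * op_cost + 8) + op_cost)"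
      and s': "s' 6 = qbinom q (n - 1) k" "\<forall>x. x \<notin> {6, 12, 13, 14, 15} \<longrightarrow> s' x = s1 x"
    by blast
  have "runs_within q inp prepare (init n k) s' (5 * Suc op_cost + ((k - 0) * (9 * op_cost + 8) + op_cost))"
    unfolding prepare_def
    apply (rule runs_within_mono)
     apply (rule runs_within_Seq_Assign[where K = op_cost],
        (rule acost_le; simp add: init_def small_less_power_len_bound k_less_n less_imp_le),
        simp add: init_def)+
     apply (rule runs_within_eq_start[OF _ loop])
    by (simp_all add: s1_def init_def)
  then show ?thesis
    using s' unfolding s1_def by auto
qed

lemma index_main_runs:
  "\<exists>s'. runs_within q inp index_main (init n k) s' main_cost \<and> s' 0 = (\<Sum>i=1..n. index_term i)"
proof -
  obtain s1 where prep: "runs_within q inp prepare (init n k) s1 (5 * Suc op_cost + (k * (9 * op_cost + 8) + op_cost))"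
      and s1: "s1 6 = qbinom q (n - 1) k" "s1 10 = 1" "\<forall>x\<in>{0, 1, 2, 9}. s1 x = init n k x"
    using prepare_runs by blast
  have s1': "s1 0 = 0" "s1 1 = n" "s1 2 = k" "s1 9 = 0"
    using s1(3) by (simp_all add: init_def)
  define s2 where "s2 = s1(3 := n, 4 := n - 1, 5 := k, 7 := 0, 8 := 1)"
  have "runs_within q inp init_counters s1 s2 (5 * Suc op_cost)"
    unfolding init_counters_def s2_def
    apply (rule runs_within_mono)
     apply (rule runs_within_Seq_Assign[where K = op_cost],
        (rule acost_le; use s1(1,2) s1' k_less_n in \<open>simp add: small_less_power_len_bound\<close>),
        use s1(1,2) s1' in simp)+
     apply (rule runs_within_Assign[where K = op_cost],
        (rule acost_le; use s1(1,2) s1' in \<open>simp add: small_less_power_len_bound\<close>))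
    using s1(1,2) s1' by simp_all
  moreover have "loop_inv s2 1"
    unfolding loop_inv_def at_column_def s2_def using s1(1,2) s1' k_less_n by simp
  then obtain s3 where "runs_within q inp index_loop s2 s3 (loop_cost 1)"
      and "s3 0 = (\<Sum>i=1..n. index_term i)"
    using index_loop_runs by blast
  ultimately have "runs_within q inp index_main (init n k) s3
      ((5 * Suc op_cost + (k * (9 * op_cost + 8) + op_cost)) + (5 * Suc op_cost + loop_cost 1))"
    unfolding index_main_def by (intro runs_within_Seq[OF prep] runs_within_Seq)
  then have "runs_within q inp index_main (init n k) s3 main_cost"
    unfolding main_cost_def by (simp add: add.assoc)
  then show ?thesis
    using \<open>s3 0 = _\<close> by blast
qed

lemma main_cost_le: "main_cost + 2 * (n + 1) \<le> 1000 * (n * k * (n - k) * lg n * lg (lg n))"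
proof -
  define Y where "Y = k * (n - k) * (lg n * lg (lg n))"
  have "1 \<le> k * (n - k)" and "1 \<le> lg n * lg (lg n)"
    using k_pos k_less_n lg_ge_1[of n] lg_ge_1[of "lg n"] by simp_all
  then have Y: "1 \<le> Y" "k * (n - k) \<le> Y"
    unfolding Y_def using mult_le_mono[of 1 "k * (n - k)" 1 "lg n * lg (lg n)"] by simp_all
  have op: "op_cost = 12 * Y"
    unfolding op_cost_def len_bound_def Y_def by simp
  have "k * (9 * op_cost + 8) \<le> n * (116 * Y)"
    using k_less_n op Y(1) by (intro mult_le_mono) simp_all
  moreover have "n * (step_cost + 2) \<le> n * (270 * Y)"
    unfolding step_cost_def update_cost_def op using Y(1) by simp
  moreover have "(n - k) * read_cost \<le> 24 * (n * Y)"
  proof -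
    have "k \<le> n * k" "n \<le> n * k" "1 \<le> n * k"
      using n_pos k_pos by simp_all
    moreover have "k * (9 * n + 13) = 9 * (n * k) + 13 * k"
      by (simp add: algebra_simps)
    ultimately have "read_cost \<le> 24 * (n * k)"
      unfolding read_cost_def by linarith
    then have "(n - k) * read_cost \<le> 24 * (n * (k * (n - k)))"
      using mult_le_mono2[of read_cost "24 * (n * k)" "n - k"] by (simp add: ac_simps)
    also have "\<dots> \<le> 24 * (n * Y)"
      using Y(2) by simp
    finally show ?thesis .
  qed
  moreover have "Y \<le> n * Y" and "1 \<le> n * Y" and "n \<le> n * Y"
    using n_pos Y(1) mult_le_mono[of 1 n 1 Y] by simp_all
  moreover have "main_cost + 2 * (n + 1) = 11 * op_cost + 10 + k * (9 * op_cost + 8)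
      + n * (step_cost + 2) + (n - k) * read_cost + 2 * n + 4"
    unfolding main_cost_def loop_cost_def by simp
  ultimately have "main_cost + 2 * (n + 1) \<le> 1000 * (n * Y)"
    using op by linarith
  then show ?thesis
    unfolding Y_def by (simp add: ac_simps)
qed

lemma index_prog_runs:
  "\<exists>s t. big q inp index_prog (init n k) t s \<and> s 0 = (\<Sum>i=1..n. index_term i)
     \<and> t \<le> 1000 * (n * k * (n - k) * lg n * lg (lg n) + n + 1)"
proof -
  obtain s where main: "runs_within q inp index_main (init n k) s main_cost"
      and "s 0 = (\<Sum>i=1..n. index_term i)"
    using index_main_runs by blast
  have "cmpcost q a b (init n k) \<le> n + 1" if "a \<in> {1, 2, 9}" and "b \<in> {1, 2, 9}" for a b
    using that k_less_n unfolding cmpcost_def init_def by (auto intro!: qlen_small)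
  then have "runs_within q inp index_prog (init n k) s ((n + 1) + ((n + 1) + main_cost))"
    unfolding index_prog_def using main k_pos k_less_n
    by (intro runs_within_IfT) (simp_all add: init_def)
  then have "runs_within q inp index_prog (init n k) s (1000 * (n * k * (n - k) * lg n * lg (lg n) + n + 1))"
    by (rule runs_within_mono) (use main_cost_le in simp)
  then show ?thesis
    using \<open>s 0 = _\<close> unfolding runs_within_def by blast
qed

lemma I_EXT_eq_sum_index_term:
  fixes \<phi> :: "'a::{finite,field} \<Rightarrow> nat" and X
  assumes inp: "inp = EXT \<phi> n k X" and q: "q = card (UNIV :: 'a set)"
  shows "I_EXT \<phi> n k X = (\<Sum>j=1..n. index_term j)"
proof -
  have column_pos: "1 \<le> n + 1 - j" "n + 1 - j \<le> n" "n + 1 - (n + 1 - j) = j" if "1 \<le> j" "j \<le> n" for j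
    using that by auto
  have vv: "vv n k X j = lead_bit j" if "1 \<le> j" "j \<le> n" for j
    unfolding lead_bit_def using column_pos[OF that] by (simp add: inp EXT_def)
  have ww: "ww n k X (j - 1) = lead_count (j - 1)" if "1 \<le> j" "j \<le> n" for j
    unfolding ww_def lead_count_def using that by (intro sum.cong) (auto intro!: vv)
  have colval: "colval \<phi> n k X j = column j" if "1 \<le> j" "j \<le> n" for j
    unfolding colval_def column_def col_prefix_def q[symmetric] using column_pos[OF that]
    by (intro sum.cong) (auto simp: inp EXT_def)
  show ?thesis
    unfolding I_EXT_def q[symmetric] index_term_def
    by (rule sum.cong) (auto simp: vv ww[simplified] colval gbinom_eq_qbinom[OF q_ge_2])
qed

end

section \<open>Computing the index\<close>

lemma card_field_ge_2: "2 \<le> card (UNIV :: 'a::{finite,field} set)"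
proof -
  have "card {0, 1 :: 'a} \<le> card (UNIV :: 'a set)"
    by (intro card_mono) auto
  then show ?thesis
    by simp
qed

lemma vv_le_1: "vv n k X j \<le> 1"
  unfolding vv_def by simp

lemma ww_le: "ww n k X j \<le> j"
proof -
  have "ww n k X j \<le> (\<Sum>l=1..j. 1)"
    unfolding ww_def by (rule sum_mono) (rule vv_le_1)
  then show ?thesis
    by simp
qed

lemma EXT_less_card:
  fixes \<phi> :: "'a::{finite,field} \<Rightarrow> nat"
  assumes "bij_betw \<phi> UNIV {0..<card (UNIV :: 'a set)}"
  shows "EXT \<phi> n k X t p < card (UNIV :: 'a set)"
proof -
  have "vv n k X i < card (UNIV :: 'a set)" for i
    using vv_le_1[of n k X i] card_field_ge_2[where 'a = 'a] by linarith
  moreover have "\<phi> x < card (UNIV :: 'a set)" for x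
    using assms unfolding bij_betw_def by auto
  ultimately show ?thesis
    using card_field_ge_2[where 'a = 'a] unfolding EXT_def by auto
qed

lemma index_input_EXT:
  fixes \<phi> :: "'a::{finite,field} \<Rightarrow> nat"
  assumes "bij_betw \<phi> UNIV {0..<card (UNIV :: 'a set)}" and "0 < k" and "k < n"
  shows "index_input (card (UNIV :: 'a set)) (EXT \<phi> n k X) n k"
  using assms card_field_ge_2[where 'a = 'a] EXT_less_card[OF assms(1)] vv_le_1[of n k X]
  by unfold_locales (auto simp: EXT_def)

lemma I_EXT_trivial:
  fixes \<phi> :: "'a::{finite,field} \<Rightarrow> nat"
  assumes "k = 0 \<or> k = n"
  shows "I_EXT \<phi> n k X = 0"
proof (cases "k = 0")
  case True
  then show ?thesis
    unfolding I_EXT_def vv_def colval_def by simp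
next
  case False
  with assms have "gbinom (card (UNIV :: 'a set)) (n - j) (k - ww n k X (j - 1)) = 0" if "j \<in> {1..n}" for j
    using ww_le[of n k X "j - 1"] that unfolding gbinom_def by auto
  then show ?thesis
    unfolding I_EXT_def by (intro sum.neutral) simp
qed

lemma index_prog_runs_trivial:
  assumes "2 \<le> q" and "k = 0 \<or> k = n"
  shows "\<exists>s t. big q inp index_prog (init n k) t s \<and> s 0 = 0
    \<and> t \<le> 1000 * (n * k * (n - k) * lg n * lg (lg n) + n + 1)"
proof -
  have cmp: "cmpcost q a b (init n k) \<le> 2 * n + 2" if "init n k a \<le> n" and "init n k b \<le> n" for a b
    unfolding cmpcost_def using qlen_le_self[OF assms(1), of "init n k a"]
      qlen_le_self[OF assms(1), of "init n k b"] that by auto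
  have "runs_within q inp index_prog (init n k) (init n k) ((2 * n + 2) + ((2 * n + 2) + 1))"
  proof (cases "k = 0")
    case True
    then have "runs_within q inp index_prog (init n k) (init n k) ((2 * n + 2) + 1)"
      unfolding index_prog_def using cmp by (intro runs_within_IfF runs_within_Skip) (simp_all add: init_def)
    then show ?thesis
      by (rule runs_within_mono) simp
  next
    case False
    with assms(2) show ?thesis
      unfolding index_prog_def using cmp
      by (intro runs_within_IfT runs_within_IfF runs_within_Skip) (simp_all add: init_def)
  qed
  then show ?thesis
    unfolding runs_within_def by (force simp: init_def)
qed

theorem theorem5:
  fixes \<phi> :: "'a::{finite,field} \<Rightarrow> nat"
  assumes "bij_betw \<phi> UNIV {0..<card (UNIV :: 'a set)}"
    and "\<phi> 0 = 0"
  shows "\<exists>(P::com) (C::nat). \<forall>n k (X :: (nat \<Rightarrow> 'a) set).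
           k \<le> n \<longrightarrow> X \<in> grass n k \<longrightarrow>
           (\<exists>s t. big (card (UNIV :: 'a set)) (EXT \<phi> n k X) P (init n k) t s
                  \<and> s 0 = I_EXT \<phi> n k X
                  \<and> t \<le> C * (n * k * (n - k) * lg n * lg (lg n) + n + 1))"
proof (intro exI[of _ index_prog] exI[of _ 1000] allI impI)
  fix n k :: nat and X :: "(nat \<Rightarrow> 'a) set"
  assume "k \<le> n"
  show "\<exists>s t. big (card (UNIV :: 'a set)) (EXT \<phi> n k X) index_prog (init n k) t s
      \<and> s 0 = I_EXT \<phi> n k X \<and> t \<le> 1000 * (n * k * (n - k) * lg n * lg (lg n) + n + 1)"
  proof (cases "k = 0 \<or> k = n")
    case True
    then show ?thesis
      using index_prog_runs_trivial[OF card_field_ge_2[where 'a = 'a] True, of "EXT \<phi> n k X"]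
        I_EXT_trivial[OF True, of \<phi> X] by simp
  next
    case False
    with \<open>k \<le> n\<close> interpret index_input "card (UNIV :: 'a set)" "EXT \<phi> n k X" n k
      by (intro index_input_EXT[OF assms(1)]) auto
    show ?thesis
      using index_prog_runs I_EXT_eq_sum_index_term[OF refl refl] by simp
  qed
qed

end
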